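(* Fix an integer $r\ge2$, $\varepsilon>0$ and an integer $K\ge\lceil 2^{r+1}/\varepsilon^r\rceil+1$, and let $a>0$ be a constant. Let $p=d/\binom{n-1}{r-1}$ and consider the interpolation path $A^{(0)},\dots,A^{(T)}$ for $\mathcal{H}_r(n,p)$ of any length $T\le n^{a}$. If $d=d(\varepsilon,K,r)>0$ is sufficiently large, then with probability $1-\exp(-\Omega(n))$ there does not exist a sequence of sets $S_1,\dots,S_K\subseteq[n]$ satisfying: (H1) for each $k\in[K]$ there exists $0\le t_k\le T$ such that $S_k$ is an independent set in $A^{(t_k)}$; (H2) $|S_k|\ge(1+\varepsilon)\left(\frac{1}{r-1}\cdot\frac{\log d}{d}\right)^{1/(r-1)}n$ for all $k\in[K]$; (H3) for all $2\le k\le K$, $\big|S_k\setminus\bigcup_{\ell<k}S_\ell\big|\in\left[\frac\varepsilon4\left(\frac{1}{r-1}\cdot\frac{\log d}{d}\right)^{1/(r-1)}n,\ \frac\varepsilon2\left(\frac{1}{r-1}\cdot\frac{\log d}{d}\right)^{1/(r-1)}n\right]$.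
   Context: $\mathcal{H}_r(n,p)$: random $r$-uniform hypergraph on $[n]$, each $r$-subset an edge independently with probability $p$, encoded by $A\in\{0,1\}^m$, $m=\binom nr$, with coordinates indexed by $[m]$ in a fixed order. Interpolation path of length $T$: $A^{(0)}\sim\mathcal{H}_r(n,p)$, and for $1\le t\le T$, $A^{(t)}$ is obtained from $A^{(t-1)}$ by resampling coordinate $\sigma(t)$ independently from $\mathrm{Ber}(p)$, where $\sigma(t)\in[m]$ is the unique element with $\sigma(t)\equiv t\pmod m$. A set is an independent set in $A^{(t)}$ if it contains no edge of the hypergraph encoded by $A^{(t)}$. *)

theory Defs
  imports "HOL-Probability.Probability"
begin

text \<open>A fixed order of the
  r-subsets of [n] is a bijection ord from {1..m} onto the r-subsets of {1..n};
  coordinate i encodes the potential edge ord i.\<close>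

definition rsubsets :: "nat \<Rightarrow> nat \<Rightarrow> nat set set" where
  "rsubsets n r = {e. e \<subseteq> {1..n} \<and> card e = r}"

definition is_order :: "nat \<Rightarrow> nat \<Rightarrow> (nat \<Rightarrow> nat set) \<Rightarrow> bool" where
  "is_order n r ord \<longleftrightarrow> bij_betw ord {1..n choose r} (rsubsets n r)"

definition sigma :: "nat \<Rightarrow> nat \<Rightarrow> nat" where
  "sigma m t = (if t mod m = 0 then m else t mod m)"

text \<open>The randomness: W :: nat => bool, with W 1..W m the initial coordinates of A^(0)
  and W (m+t) the fresh Ber(p) value used at resampling step t (1 <= t <= T).\<close>
fun path :: "nat \<Rightarrow> (nat \<Rightarrow> bool) \<Rightarrow> nat \<Rightarrow> (nat \<Rightarrow> bool)" where
  "path m W 0 = (\<lambda>i. if i \<in> {1..m} then W i else False)"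
| "path m W (Suc t) = (path m W t)(sigma m (Suc t) := W (m + Suc t))"

definition path_noise :: "nat \<Rightarrow> nat \<Rightarrow> real \<Rightarrow> (nat \<Rightarrow> bool) pmf" where
  "path_noise m T p = Pi_pmf {1..m+T} False (\<lambda>_. bernoulli_pmf p)"

definition indep_in :: "nat \<Rightarrow> (nat \<Rightarrow> nat set) \<Rightarrow> (nat \<Rightarrow> bool) \<Rightarrow> nat set \<Rightarrow> bool" where
  "indep_in m ord A S \<longleftrightarrow> (\<forall>i\<in>{1..m}. A i \<longrightarrow> \<not> ord i \<subseteq> S)"

definition alpha :: "nat \<Rightarrow> real \<Rightarrow> real" where
  "alpha r d = ((1 / (real r - 1)) * (ln d / d)) powr (1 / (real r - 1))"

definition bad_seq ::
  "nat \<Rightarrow> nat \<Rightarrow> (nat \<Rightarrow> nat set) \<Rightarrow> nat \<Rightarrow> real \<Rightarrow> real \<Rightarrow> nat \<Rightarrow> (nat \<Rightarrow> bool) \<Rightarrow> bool" where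
  "bad_seq n r ord T d \<epsilon> K W \<longleftrightarrow>
     (\<exists>S :: nat \<Rightarrow> nat set.
        (\<forall>k\<in>{1..K}. S k \<subseteq> {1..n}) \<and>
        (\<forall>k\<in>{1..K}. \<exists>t\<le>T. indep_in (n choose r) ord (path (n choose r) W t) (S k)) \<and>
        (\<forall>k\<in>{1..K}. real (card (S k)) \<ge> (1 + \<epsilon>) * alpha r d * real n) \<and>
        (\<forall>k\<in>{2..K}.
           \<epsilon> / 4 * alpha r d * real n \<le> real (card (S k - (\<Union>l\<in>{1..<k}. S l))) \<and>
           real (card (S k - (\<Union>l\<in>{1..<k}. S l))) \<le> \<epsilon> / 2 * alpha r d * real n))"

end

theory Submission
  imports Defs "HOL-Real_Asymp.Real_Asymp"
begin

text \<open>A first-moment argument. Fix sets S_1, ..., S_K and times t_1, ..., t_K. For S_k to be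
  independent at time t_k all potential edges inside S_k must be absent; the edges that are new in
  S_k (not inside S_1 \<union> ... \<union> S_{k-1}) are governed by pairwise distinct Bernoulli variables of the
  interpolation path, so the probability is at most (1 - p)^(number of new edges). The first set
  has about |S_1|^r / r! edges, and each of the at least \<epsilon> s/4 new vertices of S_k spans a new
  edge with any r - 1 of its at least (1 + \<epsilon>/2) s old vertices, where s = \<alpha> n is the unit of
  (H2)-(H3) and L = d \<alpha>^(r - 1) = ln d / (r - 1).

  Encoding a sequence by its first set, its new parts and its old parts (the old parts lie in the
  union of the others), the union bound over the first set contributes at most
  exp (s L (1 - 7/(8r))), and each later set a factor exp (- \<epsilon> s/4 \<cdot> L (\<epsilon>/2)^(r - 1) (1 - 1/(8r))).
  The lower bound on K makes the K - 1 losses outweigh the gain, leaving exp (- 3 s L/(4r)), which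
  absorbs the (T + 1)^K (n + 1)^K choices of times and sizes.\<close>

fun noise_index :: "nat \<Rightarrow> nat \<Rightarrow> nat \<Rightarrow> nat" where
  "noise_index m 0 i = i"
| "noise_index m (Suc t) i = (if i = sigma m (Suc t) then m + Suc t else noise_index m t i)"

definition noise_coord :: "nat \<Rightarrow> nat \<Rightarrow> nat" where
  "noise_coord m j = (if j \<le> m then j else sigma m (j - m))"

lemma path_eq_noise_index: "i \<in> {1..m} \<Longrightarrow> path m W t i = W (noise_index m t i)"
  by (induction t) auto

lemma noise_index_in_range: "i \<in> {1..m} \<Longrightarrow> noise_index m t i \<in> {1..m + t}"
  by (induction t) auto

lemma noise_coord_noise_index: "i \<in> {1..m} \<Longrightarrow> noise_coord m (noise_index m t i) = i"
  by (induction t) (auto simp: noise_coord_def)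

lemma noise_index_eq_imp_eq:
  "i \<in> {1..m} \<Longrightarrow> i' \<in> {1..m} \<Longrightarrow> noise_index m t i = noise_index m t' i' \<Longrightarrow> i = i'"
  by (metis noise_coord_noise_index)

lemma prob_Pi_bernoulli_all_False:
  assumes "finite A" "J \<subseteq> A" "0 \<le> p" "p \<le> 1"
  shows "measure_pmf.prob (Pi_pmf A False (\<lambda>_. bernoulli_pmf p)) {W. \<forall>j\<in>J. \<not> W j} = (1 - p) ^ card J"
proof -
  have "{W. \<forall>j\<in>J. \<not> W j} = Pi A (\<lambda>j. if j \<in> J then {False} else UNIV)"
    using assms(2) by (auto simp: Pi_def)
  then have "measure_pmf.prob (Pi_pmf A False (\<lambda>_. bernoulli_pmf p)) {W. \<forall>j\<in>J. \<not> W j}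
     = (\<Prod>x\<in>A. measure_pmf.prob (bernoulli_pmf p) (if x \<in> J then {False} else UNIV))"
    using measure_Pi_pmf_Pi[OF assms(1)] by simp
  also have "\<dots> = (\<Prod>x\<in>A. if x \<in> J then 1 - p else 1)"
    by (intro prod.cong refl) (use assms in \<open>auto simp: measure_pmf_single\<close>)
  also have "\<dots> = (1 - p) ^ card J"
    using assms(1,2) by (simp add: prod.If_cases Int_absorb1)
  finally show ?thesis .
qed

definition prior_union :: "(nat \<Rightarrow> nat set) \<Rightarrow> nat \<Rightarrow> nat set" where
  "prior_union S k = (\<Union>l\<in>{1..<k}. S l)"

definition new_edges :: "nat \<Rightarrow> (nat \<Rightarrow> nat set) \<Rightarrow> nat \<Rightarrow> nat set set" where
  "new_edges r S k = {e. e \<subseteq> S k \<and> card e = r \<and> \<not> e \<subseteq> prior_union S k}"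

lemma new_edges_disjoint: "k \<noteq> l \<Longrightarrow> 1 \<le> k \<Longrightarrow> 1 \<le> l \<Longrightarrow> new_edges r S k \<inter> new_edges r S l = {}"
  unfolding new_edges_def prior_union_def by (cases "k < l") auto

lemma card_bij_betw_preimage:
  assumes "bij_betw f A B" "E \<subseteq> B"
  shows "card {x \<in> A. f x \<in> E} = card E"
proof -
  have "f ` {x \<in> A. f x \<in> E} = E" using assms unfolding bij_betw_def by blast
  moreover have "inj_on f {x \<in> A. f x \<in> E}"
    using bij_betw_imp_inj_on[OF assms(1)] by (rule inj_on_subset) auto
  ultimately show ?thesis using card_image by metis
qed

text \<open>Every potential edge inside some S k at time tt k is governed by one noise variable.
  For the new edges these variables are pairwise distinct, even across different times,
  since a noise variable determines the edge it governs.\<close>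

lemma card_new_edge_noise_indices:
  assumes ord: "is_order n r ord" and m: "m = n choose r" and S: "\<forall>k\<in>{1..K}. S k \<subseteq> {1..n}"
  shows "card (\<Union>k\<in>{1..K}. noise_index m (tt k) ` {i \<in> {1..m}. ord i \<in> new_edges r S k})
         = (\<Sum>k\<in>{1..K}. card (new_edges r S k))"
proof -
  define I where "I k = {i \<in> {1..m}. ord i \<in> new_edges r S k}" for k
  have inj: "inj_on (noise_index m (tt k)) (I k)" for k
    by (rule inj_onI) (auto simp: I_def intro: noise_index_eq_imp_eq)
  have card_I: "card (I k) = card (new_edges r S k)" if "k \<in> {1..K}" for k
  proof -
    have "S k \<subseteq> {1..n}" using S that by blast
    then have "new_edges r S k \<subseteq> rsubsets n r"
      unfolding new_edges_def rsubsets_def by auto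
    with ord m show ?thesis unfolding I_def is_order_def by (intro card_bij_betw_preimage) auto
  qed
  have "card (\<Union>k\<in>{1..K}. noise_index m (tt k) ` I k) = (\<Sum>k\<in>{1..K}. card (noise_index m (tt k) ` I k))"
  proof (rule card_UN_disjoint)
    show "\<forall>k\<in>{1..K}. \<forall>l\<in>{1..K}. k \<noteq> l \<longrightarrow> noise_index m (tt k) ` I k \<inter> noise_index m (tt l) ` I l = {}"
    proof (intro ballI impI)
      fix k l assume "k \<in> {1..K}" "l \<in> {1..K}" "k \<noteq> l"
      then have "new_edges r S k \<inter> new_edges r S l = {}" by (intro new_edges_disjoint) auto
      then show "noise_index m (tt k) ` I k \<inter> noise_index m (tt l) ` I l = {}"
        unfolding I_def using noise_index_eq_imp_eq by blast
    qed
  qed (auto simp: I_def)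
  then show ?thesis unfolding I_def[symmetric] by (simp add: card_image[OF inj] card_I)
qed

lemma prob_all_indep_le:
  assumes ord: "is_order n r ord" and m: "m = n choose r"
    and S: "\<forall>k\<in>{1..K}. S k \<subseteq> {1..n}" and tt: "\<forall>k\<in>{1..K}. tt k \<le> T"
    and p: "0 \<le> p" "p \<le> 1"
  shows "measure_pmf.prob (path_noise m T p) {W. \<forall>k\<in>{1..K}. indep_in m ord (path m W (tt k)) (S k)}
     \<le> (1 - p) ^ (\<Sum>k\<in>{1..K}. card (new_edges r S k))"
proof -
  define J where "J = (\<Union>k\<in>{1..K}. noise_index m (tt k) ` {i \<in> {1..m}. ord i \<in> new_edges r S k})"
  have sub: "{W. \<forall>k\<in>{1..K}. indep_in m ord (path m W (tt k)) (S k)} \<subseteq> {W. \<forall>j\<in>J. \<not> W j}"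
  proof clarify
    fix W j assume indep: "\<forall>k\<in>{1..K}. indep_in m ord (path m W (tt k)) (S k)" and "j \<in> J" "W j"
    then obtain k i where "k \<in> {1..K}" "i \<in> {1..m}" "ord i \<in> new_edges r S k" "W (noise_index m (tt k) i)"
      unfolding J_def by auto
    with indep show False
      unfolding indep_in_def new_edges_def by (auto simp: path_eq_noise_index)
  qed
  have J: "J \<subseteq> {1..m + T}"
  proof
    fix j assume "j \<in> J"
    then obtain k i where "k \<in> {1..K}" "i \<in> {1..m}" "j = noise_index m (tt k) i"
      unfolding J_def by auto
    moreover have "tt k \<le> T" using tt \<open>k \<in> {1..K}\<close> by blast
    ultimately show "j \<in> {1..m + T}" using noise_index_in_range[of i m "tt k"] by auto
  qed
  have "measure_pmf.prob (path_noise m T p) {W. \<forall>k\<in>{1..K}. indep_in m ord (path m W (tt k)) (S k)}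
      \<le> measure_pmf.prob (path_noise m T p) {W. \<forall>j\<in>J. \<not> W j}"
    using sub by (rule measure_pmf.finite_measure_mono) simp
  also have "\<dots> = (1 - p) ^ card J"
    unfolding path_noise_def using J by (intro prob_Pi_bernoulli_all_False p) auto
  finally show ?thesis
    unfolding J_def card_new_edge_noise_indices[OF ord m S] .
qed

lemma card_new_edges_first:
  assumes "r \<ge> 1" "finite (S 1)"
  shows "card (new_edges r S 1) = card (S 1) choose r"
proof -
  have "new_edges r S 1 = {e. e \<subseteq> S 1 \<and> card e = r}"
    unfolding new_edges_def prior_union_def using assms(1) by auto
  then show ?thesis using n_subsets[OF assms(2)] by simp
qed

text \<open>A new vertex together with r - 1 old vertices of S k spans a new edge.\<close>

lemma card_new_edges_ge:
  assumes "r \<ge> 1" and fin: "finite (S k)"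
  shows "card (S k - prior_union S k) * (card (S k \<inter> prior_union S k) choose (r - 1))
         \<le> card (new_edges r S k)"
proof -
  define New where "New = S k - prior_union S k"
  define Old where "Old = S k \<inter> prior_union S k"
  define RR where "RR = {R. R \<subseteq> Old \<and> card R = r - 1}"
  have "finite Old" using fin unfolding Old_def by auto
  then have card_RR: "card RR = card Old choose (r - 1)" unfolding RR_def using n_subsets by blast
  have disj: "v \<notin> Old" "R \<subseteq> Old" if "v \<in> New" "R \<in> RR" for v R
    using that unfolding New_def Old_def RR_def by auto
  have inj: "inj_on (\<lambda>(v, R). insert v R) (New \<times> RR)"
  proof (rule inj_onI, clarify)
    fix v R v' R' assume "v \<in> New" "R \<in> RR" "v' \<in> New" "R' \<in> RR" "insert v R = insert v' R'"
    with disj show "v = v' \<and> R = R'" by (metis Diff_insert_absorb insertE insertI1 subsetD)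
  qed
  have "(\<lambda>(v, R). insert v R) ` (New \<times> RR) \<subseteq> new_edges r S k"
  proof clarify
    fix v R assume v: "v \<in> New" "R \<in> RR"
    then have "R \<subseteq> S k" "finite R" "v \<notin> R" using fin disj[OF v]
      unfolding Old_def RR_def by (auto intro: finite_subset)
    then show "insert v R \<in> new_edges r S k"
      using v assms(1) unfolding new_edges_def New_def RR_def by auto
  qed
  moreover have "finite (new_edges r S k)"
    unfolding new_edges_def using fin by (auto intro: finite_subset[of _ "Pow (S k)"])
  ultimately have "card ((\<lambda>(v, R). insert v R) ` (New \<times> RR)) \<le> card (new_edges r S k)"
    by (rule card_mono[rotated])
  then have "card New * card RR \<le> card (new_edges r S k)"
    by (simp add: card_image[OF inj] card_cartesian_product)
  then show ?thesis by (simp add: card_RR New_def Old_def)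
qed

lemma diff_pow_le_binomial_fact:
  fixes y k :: nat assumes "k \<le> y"
  shows "(real y - real k) ^ k \<le> real (y choose k) * fact k"
proof -
  have "(real y - real k) ^ k = (\<Prod>i=0..<k. real y - real k)" by simp
  also have "\<dots> \<le> (\<Prod>i=0..<k. real y - real i)"
    by (rule prod_mono) (use assms in auto)
  also have "\<dots> = real (y choose k) * fact k"
    by (simp add: binomial_gbinomial gbinomial_prod_rev)
  finally show ?thesis .
qed

lemma binomial_fact_le_pow_real: "real (n choose k) * fact k \<le> real n ^ k"
  using binomial_fact_pow[of n k] by (metis of_nat_fact of_nat_le_iff of_nat_mult of_nat_power)

lemma pow_div_fact_le_exp:
  fixes x :: real assumes "0 \<le> x"
  shows "x ^ n / fact n \<le> exp x"
proof -
  have "(\<Sum>k\<in>{n}. x ^ k / fact k) \<le> (\<Sum>k. x ^ k / fact k)"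
    using summable_exp_generic[of x] assms
    by (intro sum_le_suminf) (auto simp: divide_inverse ac_simps)
  then show ?thesis by (simp add: exp_def divide_inverse ac_simps)
qed

lemma binomial_le_exp:
  assumes "x \<ge> 1" "n \<ge> 1"
  shows "real (n choose x) \<le> exp (real x * (1 + ln (real n) - ln (real x)))"
proof -
  have pos: "real x > 0" "real n > 0" using assms by auto
  have "real (n choose x) \<le> real n ^ x / fact x"
    using binomial_fact_le_pow_real[of n x] by (simp add: field_simps)
  also have "\<dots> \<le> real n ^ x * exp (real x) / real x ^ x"
    using pow_div_fact_le_exp[of "real x" x] pos by (simp add: field_simps)
  also have "\<dots> = exp (real x * (1 + ln (real n) - ln (real x)))"
    using pos by (simp add: exp_add exp_diff ring_distribs exp_of_nat_mult exp_ln)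
  finally show ?thesis .
qed

lemma two_pow_le_exp: "(2::real) ^ j \<le> exp (real j)"
proof -
  have "(2::real) ^ j \<le> exp 1 ^ j" by (rule power_mono) (use exp_ge_add_one_self[of 1] in auto)
  then show ?thesis by (simp add: exp_of_nat_mult[symmetric])
qed

lemma one_plus_pow_le_pow:
  fixes t :: real assumes "t \<ge> 0" "k \<ge> 1"
  shows "1 + t ^ k \<le> (1 + t) ^ k"
  using assms(2)
proof (induction k rule: dec_induct)
  case (step k)
  have "1 + t ^ Suc k \<le> (1 + t) * (1 + t ^ k)" using assms(1) by (simp add: algebra_simps)
  also have "\<dots> \<le> (1 + t) * (1 + t) ^ k" by (rule mult_left_mono[OF step.IH]) (use assms in auto)
  finally show ?case by simp
qed simp

lemma quadratic_le_one_plus_pow: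
  fixes u :: real assumes "u \<ge> 0" "k \<ge> 2"
  shows "1 + real k * u + u\<^sup>2 \<le> (1 + u) ^ k"
  using assms(2)
proof (induction k rule: dec_induct)
  case base then show ?case by (simp add: power2_eq_square algebra_simps)
next
  case (step k)
  have "1 + real (Suc k) * u + u\<^sup>2 \<le> (1 + u) * (1 + real k * u + u\<^sup>2)"
    using assms(1) by (simp add: algebra_simps power2_eq_square)
  also have "\<dots> \<le> (1 + u) * (1 + u) ^ k" by (rule mult_left_mono[OF step.IH]) (use assms in auto)
  finally show ?case by simp
qed

text \<open>The exponent of the first set: \<sigma> \<mapsto> \<sigma> - \<sigma>^r / r is maximal at \<sigma> = 1, and the
  maximum 1 - 1/r survives perturbing both coefficients by 1/(32 r).\<close>

lemma linear_minus_power_le: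
  fixes \<sigma> :: real and r :: nat
  assumes r: "r \<ge> 2" and \<sigma>: "\<sigma> \<ge> 1"
  shows "\<sigma> * (1 + 1/(32*real r)) - (1 - 1/(32*real r)) * \<sigma>^r / real r \<le> 1 - 7/(8*real r)"
proof -
  define u where "u = \<sigma> - 1"
  define R where "R = real r"
  define \<delta> where "\<delta> = 1 / (32 * R)"
  have u: "u \<ge> 0" and R: "R \<ge> 2" using \<sigma> r unfolding u_def R_def by auto
  have \<delta>: "\<delta> > 0" "R * \<delta> = 1/32" "\<delta> \<le> 1/64" using R unfolding \<delta>_def by (auto simp: field_simps)
  have "1 + R * u + u\<^sup>2 \<le> \<sigma>^r"
    using quadratic_le_one_plus_pow[OF u r] unfolding u_def R_def by simp
  then have "R * (\<sigma> * (1 + \<delta>)) - (1 - \<delta>) * \<sigma>^r \<le> R * (\<sigma> * (1 + \<delta>)) - (1 - \<delta>) * (1 + R * u + u\<^sup>2)"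
    using \<delta> by (intro diff_left_mono mult_left_mono) auto
  also have "\<dots> = R - 1 + R*\<delta> + \<delta> + 2*(R*\<delta>)*u - (1-\<delta>)*u\<^sup>2"
    unfolding u_def by (simp add: algebra_simps power2_eq_square)
  also have "\<dots> \<le> R - 7/8"
  proof -
    have "u\<^sup>2 \<ge> u/8 - 1/256"
      using zero_le_power2[of "u - 1/16"] by (simp add: power2_eq_square algebra_simps)
    moreover have "(1-\<delta>)*u\<^sup>2 \<ge> (63/64)*u\<^sup>2" using \<delta> by (intro mult_right_mono) auto
    moreover have "2*(R*\<delta>)*u = u/16" using \<delta> by simp
    ultimately show ?thesis using \<delta> u by linarith
  qed
  finally have "R * (\<sigma> * (1 + \<delta>)) - (1 - \<delta>) * \<sigma>^r \<le> R - 7/8" .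
  then have "(R * (\<sigma> * (1 + \<delta>)) - (1 - \<delta>) * \<sigma>^r) / R \<le> (R - 7/8) / R"
    using R by (intro divide_right_mono) auto
  then show ?thesis using R unfolding \<delta>_def R_def by (simp add: field_simps)
qed

lemma binomial_times_pow2_le_exp:
  fixes n x K :: nat and B :: real
  assumes "x \<ge> 1" "n \<ge> 1" and "ln (real n) - ln (real x) \<le> B"
  shows "real (n choose x) * 2 ^ ((K - 1) * x) \<le> exp (real x * (1 + B + real K))"
proof -
  have "real (n choose x) \<le> exp (real x * (1 + ln (real n) - ln (real x)))"
    using binomial_le_exp assms(1,2) by blast
  also have "\<dots> \<le> exp (real x * (1 + B))"
    using assms by (intro exp_mono mult_left_mono) auto
  finally have "real (n choose x) \<le> exp (real x * (1 + B))" .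
  moreover have "(2::real) ^ ((K - 1) * x) \<le> exp (real K * real x)"
  proof -
    have "real ((K - 1) * x) \<le> real K * real x"
      by (metis diff_le_self mult_le_mono1 of_nat_le_iff of_nat_mult)
    then show ?thesis using two_pow_le_exp[of "(K - 1) * x"] by (meson exp_le_cancel_iff order_trans)
  qed
  ultimately have "real (n choose x) * 2 ^ ((K - 1) * x) \<le> exp (real x * (1 + B)) * exp (real K * real x)"
    by (intro mult_mono) auto
  then show ?thesis by (simp add: mult_exp_exp algebra_simps)
qed

lemma Bernoulli_pow_diff:
  fixes a c :: real assumes "0 \<le> c" "c \<le> a"
  shows "(1 - real k * c / a) * a ^ k \<le> (a - c) ^ k"
proof (cases "a = 0")
  case False
  then have a: "a > 0" using assms by simp
  have "1 - real k * (c / a) \<le> (1 - c / a) ^ k"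
    using Bernoulli_inequality[of "- (c / a)" k] assms a by simp
  then have "(1 - real k * c / a) * a ^ k \<le> (1 - c / a) ^ k * a ^ k"
    using a by (intro mult_right_mono) auto
  also have "\<dots> = (a - c) ^ k"
    using a by (simp add: power_mult_distrib[symmetric] field_simps)
  finally show ?thesis .
qed (use assms in simp)

lemma pow_ge_one_plus_shrunk:
  fixes e \<eta> t :: real
  assumes "e \<ge> 0" "0 \<le> \<eta>" "\<eta> \<le> 1" "k \<ge> 1" "t \<ge> 1 + e * (1 - \<eta>)"
  shows "t ^ k \<ge> 1 + e ^ k * (1 - real k * \<eta>)"
proof -
  have "1 - real k * \<eta> \<le> (1 - \<eta>) ^ k"
    using Bernoulli_inequality[of "- \<eta>" k] assms by simp
  then have "1 + e ^ k * (1 - real k * \<eta>) \<le> 1 + (e * (1 - \<eta>)) ^ k"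
    using assms by (simp add: power_mult_distrib mult_left_mono)
  also have "\<dots> \<le> (1 + e * (1 - \<eta>)) ^ k"
    using assms by (intro one_plus_pow_le_pow) auto
  also have "\<dots> \<le> t ^ k"
    using assms by (intro power_mono) auto
  finally show ?thesis .
qed

lemma pow_scaled_div_pow:
  fixes \<sigma> \<alpha> d x :: real
  assumes "r \<ge> 1" "x \<noteq> 0"
  shows "d * (\<sigma> * (\<alpha> * x)) ^ r / x ^ (r - 1) = \<alpha> * x * \<sigma> ^ r * (d * \<alpha> ^ (r - 1))"
proof -
  obtain k where "r = Suc k" using assms(1) by (cases r) auto
  then show ?thesis using assms(2) by (simp add: power_mult_distrib field_simps)
qed

text \<open>The first set spans (a - r)^r / r! \<ge> (1 - 1/(32 r)) a^r / r! potential edges once a \<ge> 32 r^3.\<close>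

lemma first_set_rate_ge:
  fixes \<alpha> d L :: real
  assumes r: "r \<ge> 2" and n: "n \<ge> 1" and \<alpha>: "\<alpha> > 0" and d: "d > 0"
    and L: "d * \<alpha> ^ (r - 1) = L" and s_ge: "32 * real r ^ 3 \<le> \<alpha> * real n" and a: "\<alpha> * real n \<le> real a"
  shows "(1 - 1 / (32 * real r)) * (\<alpha> * real n * (real a / (\<alpha> * real n)) ^ r * L) / real r
         \<le> d * (real a - real r) ^ r / (real r * real n ^ (r - 1))"
proof -
  define R s \<delta> where "R = real r" and "s = \<alpha> * real n" and "\<delta> = 1 / (32 * R)"
  have R: "R \<ge> 2" using r unfolding R_def by simp
  have "1 \<le> R * R" using mult_mono[OF R R] R by simp
  then have "R \<le> R ^ 3" using R mult_left_mono[of 1 "R * R" R] by (simp add: power3_eq_cube)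
  have s: "s > 0" using \<alpha> n unfolding s_def by simp
  have "R * R / real a \<le> \<delta>"
    using a s_ge R s unfolding \<delta>_def s_def R_def by (simp add: field_simps power3_eq_cube)
  then have "(1 - \<delta>) * real a ^ r \<le> (1 - real r * R / real a) * real a ^ r"
    unfolding R_def by (intro mult_right_mono) auto
  also have "\<dots> \<le> (real a - R) ^ r"
  proof -
    have "R \<le> real a" using \<open>R \<le> R ^ 3\<close> s_ge a unfolding R_def by linarith
    then show ?thesis using Bernoulli_pow_diff[of R "real a" r] R unfolding R_def by simp
  qed
  finally have "d * ((1 - \<delta>) * real a ^ r) / (R * real n ^ (r - 1))
      \<le> d * (real a - R) ^ r / (R * real n ^ (r - 1))"
    using d R by (intro divide_right_mono mult_left_mono) auto
  moreover have scale: "d * real a ^ r / real n ^ (r - 1) = s * (real a / s) ^ r * L"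
  proof -
    have "real a / s * s = real a" using s by simp
    moreover have "d * (real a / s * s) ^ r / real n ^ (r - 1) = s * (real a / s) ^ r * (d * \<alpha> ^ (r - 1))"
      using pow_scaled_div_pow[of r "real n" d "real a / s" \<alpha>] r n unfolding s_def by simp
    ultimately show ?thesis using L by simp
  qed
  moreover have "(1 - \<delta>) * (s * (real a / s) ^ r * L) / R = d * ((1 - \<delta>) * real a ^ r) / (R * real n ^ (r - 1))"
    unfolding scale[symmetric] using R n by (simp add: field_simps)
  ultimately show ?thesis unfolding \<delta>_def R_def s_def by simp
qed

lemma first_set_weight_le:
  fixes r K n a :: nat and \<alpha> d L :: real
  assumes r: "r \<ge> 2" and n: "n \<ge> 1" and \<alpha>: "\<alpha> > 0" and d: "d > 0"
    and L: "d * \<alpha> ^ (r - 1) = L" and ln_\<alpha>: "- ln \<alpha> \<le> L"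
    and L_ge: "32 * real r * (1 + real K) \<le> L" and s_ge: "32 * real r ^ 3 \<le> \<alpha> * real n"
    and a: "\<alpha> * real n \<le> real a" "a \<le> n"
  shows "real (n choose a) * 2 ^ ((K - 1) * a) * exp (- (d * (real a - real r) ^ r / (real r * real n ^ (r - 1))))
         \<le> exp (\<alpha> * real n * L * (1 - 7 / (8 * real r)))"
proof -
  define R s \<delta> where "R = real r" and "s = \<alpha> * real n" and "\<delta> = 1 / (32 * R)"
  define \<sigma> where "\<sigma> = real a / s"
  have R: "R \<ge> 2" using r unfolding R_def by simp
  have s: "s > 0" using \<alpha> n unfolding s_def by simp
  have "32 * real r * (1 + real K) > 0" using r by simp
  then have L_pos: "L > 0" using L_ge by linarith
  have \<sigma>: "\<sigma> \<ge> 1" "real a = \<sigma> * s" using a(1) s n unfolding \<sigma>_def s_def by auto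
  have "real a > 0" using a(1) s unfolding s_def by linarith
  then have "a \<ge> 1" by simp
  have "ln s \<le> ln (real a)" using a(1) s unfolding s_def by simp
  moreover have "ln s = ln \<alpha> + ln (real n)" using \<alpha> n unfolding s_def by (simp add: ln_mult)
  ultimately have "ln (real n) - ln (real a) \<le> L" using ln_\<alpha> by linarith
  then have gain: "real (n choose a) * 2 ^ ((K - 1) * a) \<le> exp (real a * (1 + L + real K))"
    using binomial_times_pow2_le_exp \<open>a \<ge> 1\<close> n by blast
  have loss: "(1 - \<delta>) * (s * \<sigma> ^ r * L) / R \<le> d * (real a - R) ^ r / (R * real n ^ (r - 1))"
    using first_set_rate_ge[OF r n \<alpha> d L s_ge a(1)] unfolding \<delta>_def R_def \<sigma>_def s_def .
  have "1 + real K \<le> L * \<delta>"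
    using L_ge L_pos R unfolding \<delta>_def R_def by (simp add: field_simps)
  then have "(1 + real K) * real a \<le> (L * \<delta>) * real a" by (intro mult_right_mono) auto
  then have "real a * (1 + L + real K) \<le> s * L * (\<sigma> * (1 + \<delta>))"
    using \<sigma>(2) by (simp add: algebra_simps)
  moreover have "s * L * (\<sigma> * (1 + \<delta>) - (1 - \<delta>) * \<sigma> ^ r / R) \<le> s * L * (1 - 7 / (8 * R))"
    using linear_minus_power_le[OF r \<sigma>(1)] s L_pos unfolding \<delta>_def R_def
    by (intro mult_left_mono) auto
  ultimately have "real a * (1 + L + real K) - d * (real a - R) ^ r / (R * real n ^ (r - 1))
      \<le> s * L * (1 - 7 / (8 * R))"
    using loss by (simp add: algebra_simps)
  then have "exp (real a * (1 + L + real K)) * exp (- (d * (real a - R) ^ r / (R * real n ^ (r - 1))))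
      \<le> exp (s * L * (1 - 7 / (8 * R)))"
    by (simp add: mult_exp_exp)
  with gain show ?thesis unfolding R_def s_def
    by (meson exp_gt_zero less_imp_le mult_right_mono order_trans)
qed

text \<open>Each new vertex of a later set sees at least (1 + \<epsilon>/2) s old vertices; the shift by r is
  absorbed because s \<ge> 32 r^3/\<epsilon>.\<close>

lemma new_vertex_rate_ge:
  fixes \<alpha> d L \<epsilon> :: real
  assumes r: "r \<ge> 2" and n: "n \<ge> 1" and \<alpha>: "\<alpha> > 0" and \<epsilon>: "\<epsilon> > 0"
    and L: "d * \<alpha> ^ (r - 1) = L" "L \<ge> 0" and s_ge: "32 * real r ^ 3 / \<epsilon> \<le> \<alpha> * real n"
  shows "L * (1 + (\<epsilon>/2) ^ (r - 1) * (1 - 1 / (16 * real r)))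
         \<le> d * ((1 + \<epsilon>/2) * (\<alpha> * real n) - real r) ^ (r - 1) / real n ^ (r - 1)"
proof -
  define R s where "R = real r" and "s = \<alpha> * real n"
  define \<eta> where "\<eta> = 1 / (16 * R\<^sup>2)"
  define t where "t = 1 + \<epsilon>/2 - R / s"
  have R: "R \<ge> 2" using r unfolding R_def by simp
  have s: "s > 0" using \<alpha> n unfolding s_def by simp
  have "(1 + \<epsilon>/2) * s - R = t * \<alpha> * real n"
    using \<alpha> n unfolding t_def s_def by (simp add: field_simps)
  then have rate: "d * ((1 + \<epsilon>/2) * s - R) ^ (r - 1) / real n ^ (r - 1) = L * t ^ (r - 1)"
    using n L by (simp add: power_mult_distrib)
  have "R\<^sup>2 \<ge> 4" using mult_mono[OF R R] R by (simp add: power2_eq_square)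
  then have \<eta>: "0 \<le> \<eta>" "\<eta> \<le> 1" "R * \<eta> = 1 / (16 * R)"
    using R unfolding \<eta>_def by (auto simp: power2_eq_square field_simps)
  have "R / s \<le> (\<epsilon>/2) * \<eta>"
    using s_ge s \<epsilon> R unfolding \<eta>_def s_def R_def by (simp add: field_simps power3_eq_cube power2_eq_square)
  then have "t \<ge> 1 + (\<epsilon>/2) * (1 - \<eta>)" unfolding t_def by (simp add: right_diff_distrib)
  then have "t ^ (r - 1) \<ge> 1 + (\<epsilon>/2) ^ (r - 1) * (1 - real (r - 1) * \<eta>)"
    using \<epsilon> \<eta> r by (intro pow_ge_one_plus_shrunk) auto
  moreover have "real (r - 1) * \<eta> \<le> R * \<eta>" using \<eta> unfolding R_def by (intro mult_right_mono) auto
  then have "(\<epsilon>/2) ^ (r - 1) * (1 - 1 / (16 * R)) \<le> (\<epsilon>/2) ^ (r - 1) * (1 - real (r - 1) * \<eta>)"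
    using \<epsilon> \<eta>(3) by (intro mult_left_mono) auto
  ultimately have "1 + (\<epsilon>/2) ^ (r - 1) * (1 - 1 / (16 * R)) \<le> t ^ (r - 1)" by linarith
  then show ?thesis
    using rate L(2) unfolding R_def s_def by (simp add: mult_left_mono)
qed

lemma new_part_weight_le:
  fixes r K n x :: nat and \<alpha> d L \<epsilon> :: real
  assumes r: "r \<ge> 2" and n: "n \<ge> 1" and \<alpha>: "\<alpha> > 0" and d: "d > 0" and \<epsilon>: "\<epsilon> > 0"
    and L: "d * \<alpha> ^ (r - 1) = L" and ln_\<alpha>: "- ln \<alpha> \<le> L"
    and L_ge: "16 * real r * (1 + real K + \<bar>ln (4/\<epsilon>)\<bar>) \<le> L * (\<epsilon>/2) ^ (r - 1)"
    and s_ge: "32 * real r ^ 3 / \<epsilon> \<le> \<alpha> * real n" and x: "\<epsilon> * (\<alpha> * real n) / 4 \<le> real x"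
  shows "real (n choose x) * 2 ^ ((K - 1) * x)
           * exp (- (real x * (d * ((1 + \<epsilon>/2) * (\<alpha> * real n) - real r) ^ (r - 1) / real n ^ (r - 1))))
         \<le> exp (- (\<epsilon> * (\<alpha> * real n) / 4 * L * (\<epsilon>/2) ^ (r - 1) * (1 - 1 / (8 * real r))))"
proof -
  define R s g C where "R = real r" and "s = \<alpha> * real n" and "g = (\<epsilon>/2) ^ (r - 1)"
    and "C = 1 + real K + \<bar>ln (4/\<epsilon>)\<bar>"
  define Q where "Q = d * ((1 + \<epsilon>/2) * s - R) ^ (r - 1) / real n ^ (r - 1)"
  have R: "R \<ge> 2" using r unfolding R_def by simp
  have s: "s > 0" using \<alpha> n unfolding s_def by simp
  then have "\<epsilon> * s / 4 > 0" using \<epsilon> by simp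
  then have x_pos: "real x > 0" using x unfolding s_def by linarith
  have g: "g > 0" using \<epsilon> unfolding g_def by simp
  have C: "16 * R * C \<le> L * g" "C \<ge> 1" using L_ge unfolding R_def C_def g_def by auto
  moreover have "16 * R * C > 0" using R C(2) by simp
  ultimately have Lg: "L * g > 0" by linarith
  then have "L > 0" using g by (simp add: zero_less_mult_iff)
  then have Q: "L * (1 + g * (1 - 1 / (16 * R))) \<le> Q"
    using new_vertex_rate_ge[OF r n \<alpha> \<epsilon> L _ s_ge] unfolding Q_def R_def s_def g_def by simp
  have "ln (\<epsilon> * s / 4) \<le> ln (real x)" using x x_pos \<epsilon> s unfolding s_def by simp
  moreover have "ln (\<epsilon> * s / 4) = - ln (4 / \<epsilon>) + ln \<alpha> + ln (real n)"
    using \<epsilon> \<alpha> n unfolding s_def by (simp add: ln_mult ln_div)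
  ultimately have "ln (real n) - ln (real x) \<le> \<bar>ln (4/\<epsilon>)\<bar> + L" using ln_\<alpha> by linarith
  then have "real (n choose x) * 2 ^ ((K - 1) * x) \<le> exp (real x * (1 + (\<bar>ln (4/\<epsilon>)\<bar> + L) + real K))"
    using x_pos n by (intro binomial_times_pow2_le_exp) auto
  then have gain: "real (n choose x) * 2 ^ ((K - 1) * x) \<le> exp (real x * (C + L))"
    unfolding C_def by (simp add: algebra_simps)
  have "C + L - Q \<le> C - L * g * (1 - 1 / (16 * R))"
    using Q by (simp add: algebra_simps)
  also have "\<dots> \<le> - (L * g * (1 - 1 / (8 * R)))"
    using C R by (simp add: field_simps)
  finally have "real x * (C + L - Q) \<le> real x * - (L * g * (1 - 1 / (8 * R)))"
    using x_pos by (intro mult_left_mono) auto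
  also have "\<dots> \<le> \<epsilon> * s / 4 * - (L * g * (1 - 1 / (8 * R)))"
  proof (rule mult_right_mono_neg)
    have "1 / (8 * R) \<le> 1" using R by simp
    then show "- (L * g * (1 - 1 / (8 * R))) \<le> 0" using Lg by simp
  qed (use x in \<open>simp add: s_def\<close>)
  finally have "exp (real x * (C + L)) * exp (- (real x * Q)) \<le> exp (- (\<epsilon> * s / 4 * L * g * (1 - 1 / (8 * R))))"
    by (simp add: mult_exp_exp right_diff_distrib)
  with gain show ?thesis unfolding Q_def R_def s_def g_def
    by (meson exp_gt_zero less_imp_le mult_right_mono order_trans)
qed

lemma sum_card_subsets_le:
  fixes f :: "nat \<Rightarrow> real"
  assumes X: "X \<subseteq> Pow {1..n}" and f: "\<And>a. f a \<ge> 0" and B: "B \<ge> 0"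
    and bound: "\<And>A. A \<in> X \<Longrightarrow> real (n choose card A) * f (card A) \<le> B"
  shows "(\<Sum>A\<in>X. f (card A)) \<le> (real n + 1) * B"
proof -
  have "finite X" using X by (rule finite_subset) simp
  moreover have "card ` X \<subseteq> {0..n}"
  proof
    fix a assume "a \<in> card ` X"
    then obtain A where "A \<in> X" "a = card A" by blast
    moreover have "card A \<le> card {1..n}" using X \<open>A \<in> X\<close> by (intro card_mono) auto
    ultimately show "a \<in> {0..n}" by simp
  qed
  ultimately have "(\<Sum>A\<in>X. f (card A)) = (\<Sum>a\<in>{0..n}. \<Sum>A\<in>{A \<in> X. card A = a}. f (card A))"
    by (intro sum.group[symmetric]) auto
  also have "\<dots> \<le> (\<Sum>a\<in>{0..n}. B)"
  proof (rule sum_mono)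
    fix a
    show "(\<Sum>A\<in>{A \<in> X. card A = a}. f (card A)) \<le> B"
    proof (cases "\<exists>A\<in>X. card A = a")
      case True
      then obtain A0 where A0: "A0 \<in> X" "card A0 = a" by blast
      have "{A \<in> X. card A = a} \<subseteq> {A. A \<subseteq> {1..n} \<and> card A = a}" using X by auto
      then have "card {A \<in> X. card A = a} \<le> n choose a"
        using card_mono[of "{A. A \<subseteq> {1..n} \<and> card A = a}"] n_subsets[of "{1..n}" a] by simp
      then have "(\<Sum>A\<in>{A \<in> X. card A = a}. f (card A)) \<le> real (n choose a) * f a"
        using f by (simp add: mult_right_mono)
      also have "\<dots> \<le> B" using bound[OF A0(1)] A0(2) by simp
      finally show ?thesis .
    next
      case False
      then have empty: "{A \<in> X. card A = a} = {}" by blast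
      show ?thesis unfolding empty using B by simp
    qed
  qed
  finally show ?thesis by (simp add: add.commute)
qed

lemma prior_union_subset:
  "k \<ge> 1 \<Longrightarrow> prior_union S k \<subseteq> S 1 \<union> (\<Union>j\<in>{2..<k}. S j - prior_union S j)"
proof (induction k rule: dec_induct)
  case (step k)
  have "prior_union S (Suc k) = prior_union S k \<union> S k"
    using step.hyps unfolding prior_union_def by (auto simp: less_Suc_eq)
  moreover have "prior_union S k \<subseteq> S 1 \<union> (\<Union>j\<in>{2..<Suc k}. S j - prior_union S j)"
    using step.IH by auto
  moreover have "S k \<subseteq> S 1 \<union> (\<Union>j\<in>{2..<Suc k}. S j - prior_union S j) \<union> prior_union S k"
  proof (cases "k = 1")
    case False
    then have "k \<in> {2..<Suc k}" using step.hyps by auto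
    then show ?thesis by blast
  qed simp
  ultimately show ?case by blast
qed (simp add: prior_union_def)

text \<open>A sequence is encoded by its first set, its new parts and its old parts; the old part of
  S k lies in the union of the first set and the new parts, which is what keeps the count small.\<close>

definition seq_code :: "nat \<Rightarrow> (nat \<Rightarrow> nat set) \<Rightarrow> (nat set \<times> (nat \<Rightarrow> nat set)) \<times> (nat \<Rightarrow> nat set)" where
  "seq_code K S = ((S 1, restrict (\<lambda>k. S k - prior_union S k) {2..K}), restrict (\<lambda>k. S k \<inter> prior_union S k) {2..K})"

lemma inj_on_seq_code: "inj_on (seq_code K) (PiE {1..K} B)"
proof (rule inj_onI)
  fix S S' assume S: "S \<in> PiE {1..K} B" "S' \<in> PiE {1..K} B" and code: "seq_code K S = seq_code K S'"
  have "S k = S' k" if "k \<in> {2..K}" for k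
  proof -
    have "restrict (\<lambda>k. S k - prior_union S k) {2..K} k = restrict (\<lambda>k. S' k - prior_union S' k) {2..K} k"
      "restrict (\<lambda>k. S k \<inter> prior_union S k) {2..K} k = restrict (\<lambda>k. S' k \<inter> prior_union S' k) {2..K} k"
      using code unfolding seq_code_def by simp_all
    then have "S k - prior_union S k = S' k - prior_union S' k" "S k \<inter> prior_union S k = S' k \<inter> prior_union S' k"
      using that by simp_all
    then show ?thesis by blast
  qed
  moreover have "S 1 = S' 1" using code unfolding seq_code_def by simp
  ultimately have "S k = S' k" if "k \<in> {1..K}" for k
    using that by (cases "k = 1") auto
  then show "S = S'" using S by (intro PiE_ext) auto
qed

lemma seq_code_old_parts:
  "snd (seq_code K S) \<in> PiE {2..K} (\<lambda>_. Pow (fst (fst (seq_code K S)) \<union> (\<Union>k\<in>{2..K}. snd (fst (seq_code K S)) k)))"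
proof -
  have "S k \<inter> prior_union S k \<subseteq> S 1 \<union> (\<Union>j\<in>{2..K}. S j - prior_union S j)" if "k \<in> {2..K}" for k
    using prior_union_subset[of k S] that by force
  then show ?thesis unfolding seq_code_def by auto
qed

lemma sum_Times_PiE_prod:
  fixes f g :: "'a \<Rightarrow> real"
  assumes "finite I" "finite N"
  shows "(\<Sum>b\<in>A \<times> PiE I (\<lambda>_. N). f (fst b) * (\<Prod>k\<in>I. g (snd b k))) = (\<Sum>a\<in>A. f a) * (\<Sum>x\<in>N. g x) ^ card I"
proof -
  have "(\<Sum>b\<in>A \<times> PiE I (\<lambda>_. N). f (fst b) * (\<Prod>k\<in>I. g (snd b k)))
      = (\<Sum>a\<in>A. f a) * (\<Sum>h\<in>PiE I (\<lambda>_. N). \<Prod>k\<in>I. g (h k))"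
    unfolding sum_product sum.cartesian_product by (simp add: split_def)
  also have "(\<Sum>h\<in>PiE I (\<lambda>_. N). \<Prod>k\<in>I. g (h k)) = (\<Prod>k\<in>I. \<Sum>x\<in>N. g x)"
    by (rule prod_sum_PiE[symmetric]) (use assms in auto)
  finally show ?thesis by simp
qed

lemma card_PiE_Pow_Un_le:
  assumes "finite I" "finite A" "\<And>k. k \<in> I \<Longrightarrow> finite (N k)"
  shows "card (PiE I (\<lambda>_. Pow (A \<union> (\<Union>k\<in>I. N k)))) \<le> 2 ^ (card I * card A) * (\<Prod>k\<in>I. 2 ^ (card I * card (N k)))"
proof -
  have "card (A \<union> (\<Union>k\<in>I. N k)) \<le> card A + (\<Sum>k\<in>I. card (N k))"
    using card_Un_le card_UN_le[OF assms(1), of N] by (meson add_left_mono order_trans)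
  then have "(2::nat) ^ (card I * card (A \<union> (\<Union>k\<in>I. N k))) \<le> 2 ^ (card I * (card A + (\<Sum>k\<in>I. card (N k))))"
    by (intro power_increasing mult_le_mono2) auto
  also have "\<dots> = 2 ^ (card I * card A) * (\<Prod>k\<in>I. 2 ^ (card I * card (N k)))"
    by (simp add: distrib_left power_add sum_distrib_left power_sum)
  finally show ?thesis
    using assms by (simp add: card_PiE card_Pow power_mult[symmetric] mult.commute)
qed

lemma sum_seq_weight_le:
  fixes wa wn :: "nat \<Rightarrow> real" and Pa Pn :: "nat \<Rightarrow> bool"
  assumes wa: "\<And>a. wa a \<ge> 0" and wn: "\<And>x. wn x \<ge> 0" and K: "K \<ge> 1"
  shows "(\<Sum>S\<in>{S \<in> PiE {1..K} (\<lambda>_. Pow {1..n}). Pa (card (S 1)) \<and> (\<forall>k\<in>{2..K}. Pn (card (S k - prior_union S k)))}.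
            wa (card (S 1)) * (\<Prod>k\<in>{2..K}. wn (card (S k - prior_union S k))))
       \<le> (\<Sum>A\<in>{A\<in>Pow {1..n}. Pa (card A)}. 2 ^ ((K - 1) * card A) * wa (card A)) *
          (\<Sum>N\<in>{N\<in>Pow {1..n}. Pn (card N)}. 2 ^ ((K - 1) * card N) * wn (card N)) ^ (K - 1)"
  (is "(\<Sum>S\<in>?SS. _) \<le> (\<Sum>A\<in>?AA. ?fa A) * (\<Sum>N\<in>?NN. ?fn N) ^ _")
proof -
  define I where "I = {2..K}"
  define Base where "Base = ?AA \<times> PiE I (\<lambda>_. ?NN)"
  define V where "V b = fst b \<union> (\<Union>k\<in>I. snd b k)" for b :: "nat set \<times> (nat \<Rightarrow> nat set)"
  define wt where "wt b = wa (card (fst b)) * (\<Prod>k\<in>I. wn (card (snd b k)))" for b :: "nat set \<times> (nat \<Rightarrow> nat set)"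
  have I: "finite I" "card I = K - 1" unfolding I_def by auto
  have finite_Base: "finite Base" unfolding Base_def using I by (auto intro!: finite_PiE)
  have fin: "finite (fst b)" "\<forall>k\<in>I. finite (snd b k)" if "b \<in> Base" for b
  proof -
    have "fst b \<in> ?AA" "snd b \<in> PiE I (\<lambda>_. ?NN)"
      using that unfolding Base_def mem_Times_iff by blast+
    then have "fst b \<subseteq> {1..n}" "\<forall>k\<in>I. snd b k \<subseteq> {1..n}"
      by (blast dest: PiE_mem)+
    then show "finite (fst b)" "\<forall>k\<in>I. finite (snd b k)" by (auto intro: finite_subset)
  qed
  have wt: "wt b \<ge> 0" for b unfolding wt_def using wa wn by (simp add: prod_nonneg)
  have code: "seq_code K S \<in> Sigma Base (\<lambda>b. PiE I (\<lambda>_. Pow (V b)))" if S: "S \<in> ?SS" for S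
  proof -
    have "fst (seq_code K S) \<in> Base"
      using S K unfolding seq_code_def Base_def I_def by (auto simp: PiE_iff)
    moreover have "snd (seq_code K S) \<in> PiE I (\<lambda>_. Pow (V (fst (seq_code K S))))"
      using seq_code_old_parts[of K S] unfolding V_def I_def .
    ultimately show ?thesis by (metis SigmaI prod.collapse)
  qed
  have "inj_on (seq_code K) ?SS"
    using inj_on_seq_code[of K "\<lambda>_. Pow {1..n}"] by (rule inj_on_subset) auto
  then have "(\<Sum>S\<in>?SS. wt (fst (seq_code K S))) = (\<Sum>z\<in>seq_code K ` ?SS. wt (fst z))"
    by (simp only: sum.reindex comp_def)
  also have "\<dots> \<le> (\<Sum>z\<in>Sigma Base (\<lambda>b. PiE I (\<lambda>_. Pow (V b))). wt (fst z))"
  proof (rule sum_mono2)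
    show "finite (Sigma Base (\<lambda>b. PiE I (\<lambda>_. Pow (V b))))"
      using finite_Base fin I unfolding V_def by (intro finite_SigmaI finite_PiE) auto
  qed (use code wt in blast)+
  also have "\<dots> = (\<Sum>b\<in>Base. \<Sum>_\<in>PiE I (\<lambda>_. Pow (V b)). wt b)"
    using finite_Base fin I unfolding V_def by (subst sum.Sigma) (auto simp: split_def intro!: finite_PiE)
  also have "\<dots> = (\<Sum>b\<in>Base. wt b * card (PiE I (\<lambda>_. Pow (V b))))"
    by (simp add: mult.commute)
  also have "\<dots> \<le> (\<Sum>b\<in>Base. ?fa (fst b) * (\<Prod>k\<in>I. ?fn (snd b k)))"
  proof (rule sum_mono)
    fix b assume b: "b \<in> Base"
    then have "card (PiE I (\<lambda>_. Pow (V b)))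
        \<le> 2 ^ ((K - 1) * card (fst b)) * (\<Prod>k\<in>I. 2 ^ ((K - 1) * card (snd b k)))"
      using card_PiE_Pow_Un_le[of I "fst b" "snd b"] I fin[OF b] unfolding V_def by simp
    then have "real (card (PiE I (\<lambda>_. Pow (V b))))
        \<le> real (2 ^ ((K - 1) * card (fst b)) * (\<Prod>k\<in>I. 2 ^ ((K - 1) * card (snd b k))))"
      by (rule of_nat_mono)
    then show "wt b * card (PiE I (\<lambda>_. Pow (V b))) \<le> ?fa (fst b) * (\<Prod>k\<in>I. ?fn (snd b k))"
      using wt[of b] mult_left_mono unfolding wt_def by (fastforce simp: prod.distrib ac_simps)
  qed
  also have "\<dots> = (\<Sum>A\<in>?AA. ?fa A) * (\<Sum>N\<in>?NN. ?fn N) ^ (K - 1)"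
    unfolding Base_def using sum_Times_PiE_prod[of I ?NN ?fa ?fn ?AA] I by simp
  finally show ?thesis
    by (simp add: seq_code_def wt_def I_def)
qed

lemma edge_prob_times_binomial_ge:
  fixes y j :: nat and d :: real
  assumes C: "((n - 1) choose (r - 1)) > 0" and d: "d \<ge> 0" and jy: "j \<le> y"
  shows "d * ((real y - real j) ^ j / fact j) / (real n ^ (r - 1) / fact (r - 1))
         \<le> d / real ((n - 1) choose (r - 1)) * real (y choose j)"
proof -
  have "real ((n - 1) choose (r - 1)) * fact (r - 1) \<le> real (n - 1) ^ (r - 1)"
    by (rule binomial_fact_le_pow_real)
  also have "\<dots> \<le> real n ^ (r - 1)" by (intro power_mono) auto
  finally have "real ((n - 1) choose (r - 1)) \<le> real n ^ (r - 1) / fact (r - 1)"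
    by (simp add: pos_le_divide_eq)
  moreover have "(real y - real j) ^ j / fact j \<le> real (y choose j)"
    using diff_pow_le_binomial_fact[OF jy] by (simp add: pos_divide_le_eq)
  ultimately have "d * ((real y - real j) ^ j / fact j) / (real n ^ (r - 1) / fact (r - 1))
      \<le> d * real (y choose j) / real ((n - 1) choose (r - 1))"
    using C d by (intro frac_le mult_left_mono) auto
  then show ?thesis by simp
qed

lemma first_set_new_edges_ge:
  fixes d :: real
  assumes r: "r \<ge> 1" and C: "((n - 1) choose (r - 1)) > 0" and d: "d \<ge> 0"
    and S: "finite (S 1)" "r \<le> card (S 1)"
  shows "d * (real (card (S 1)) - real r) ^ r / (real r * real n ^ (r - 1))
         \<le> d / real ((n - 1) choose (r - 1)) * real (card (new_edges r S 1))"
proof -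
  have "d * ((real (card (S 1)) - real r) ^ r / fact r) / (real n ^ (r - 1) / fact (r - 1))
      \<le> d / real ((n - 1) choose (r - 1)) * real (card (S 1) choose r)"
    using C d S by (intro edge_prob_times_binomial_ge) auto
  moreover have "(fact r :: real) = real r * fact (r - 1)"
    using r fact_reduce[of r] by simp
  ultimately show ?thesis
    using card_new_edges_first[of r S] S r by (simp add: field_simps)
qed

lemma later_set_new_edges_ge:
  fixes d Y :: real
  assumes r: "r \<ge> 1" and C: "((n - 1) choose (r - 1)) > 0" and d: "d \<ge> 0"
    and S: "finite (S k)" and Y: "real r \<le> Y" "Y \<le> real (card (S k \<inter> prior_union S k))"
  shows "real (card (S k - prior_union S k)) * (d * (Y - real r) ^ (r - 1) / real n ^ (r - 1))
         \<le> d / real ((n - 1) choose (r - 1)) * real (card (new_edges r S k))"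
proof -
  define p x y where "p = d / real ((n - 1) choose (r - 1))"
    and "x = card (S k - prior_union S k)" and "y = card (S k \<inter> prior_union S k)"
  have "(Y - real r) ^ (r - 1) \<le> (real y - real (r - 1)) ^ (r - 1)"
    using Y r unfolding y_def by (intro power_mono) (auto simp: of_nat_diff)
  then have "d * (Y - real r) ^ (r - 1) / real n ^ (r - 1)
      \<le> d * ((real y - real (r - 1)) ^ (r - 1) / fact (r - 1)) / (real n ^ (r - 1) / fact (r - 1))"
    using d by (simp add: divide_right_mono mult_left_mono)
  also have "\<dots> \<le> p * real (y choose (r - 1))"
    unfolding p_def using r C d Y unfolding y_def by (intro edge_prob_times_binomial_ge) auto
  finally have "real x * (d * (Y - real r) ^ (r - 1) / real n ^ (r - 1)) \<le> real x * (p * real (y choose (r - 1)))"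
    by (intro mult_left_mono) auto
  also have "\<dots> = p * real (x * (y choose (r - 1)))" by simp
  also have "\<dots> \<le> p * real (card (new_edges r S k))"
    using card_new_edges_ge[of r S k] S r d unfolding p_def x_def y_def
    by (intro mult_left_mono of_nat_mono) auto
  finally show ?thesis unfolding p_def x_def .
qed

lemma weighted_new_edges_ge:
  fixes s \<epsilon> d :: real
  assumes r: "r \<ge> 1" and C: "((n - 1) choose (r - 1)) > 0" and d: "d \<ge> 0"
    and \<epsilon>: "\<epsilon> > 0" and s: "(1 + \<epsilon>/2) * s - real r \<ge> 0" and K: "K \<ge> 1"
    and S_sub: "\<forall>k\<in>{1..K}. S k \<subseteq> {1..n}"
    and S_card: "\<forall>k\<in>{1..K}. (1 + \<epsilon>) * s \<le> real (card (S k))"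
    and S_new: "\<forall>k\<in>{2..K}. real (card (S k - prior_union S k)) \<le> \<epsilon> / 2 * s"
  shows "d * (real (card (S 1)) - real r) ^ r / (real r * real n ^ (r - 1))
         + (\<Sum>k\<in>{2..K}. real (card (S k - prior_union S k)) * (d * ((1 + \<epsilon>/2) * s - real r) ^ (r - 1) / real n ^ (r - 1)))
         \<le> d / real ((n - 1) choose (r - 1)) * (\<Sum>k\<in>{1..K}. card (new_edges r S k))"
proof -
  define p where "p = d / real ((n - 1) choose (r - 1))"
  have fin: "finite (S k)" if "k \<in> {1..K}" for k
    using S_sub that finite_subset[of "S k" "{1..n}"] by auto
  have "(1 + \<epsilon>/2) * s \<ge> 0" using s of_nat_0_le_iff[of r] by linarith
  then have "s \<ge> 0" using \<epsilon> by (simp add: zero_le_mult_iff)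
  then have s_le: "(1 + \<epsilon>/2) * s \<le> (1 + \<epsilon>) * s" using \<epsilon> by (intro mult_right_mono) auto
  have "(1 + \<epsilon>) * s \<le> real (card (S 1))" using S_card K by simp
  then have "r \<le> card (S 1)" using s s_le by linarith
  then have first: "d * (real (card (S 1)) - real r) ^ r / (real r * real n ^ (r - 1))
      \<le> p * real (card (new_edges r S 1))"
    unfolding p_def using first_set_new_edges_ge[OF r C d] fin K by simp
  have "real (card (S k - prior_union S k)) * (d * ((1 + \<epsilon>/2) * s - real r) ^ (r - 1) / real n ^ (r - 1))
      \<le> p * real (card (new_edges r S k))" if k: "k \<in> {2..K}" for k
  proof (rule later_set_new_edges_ge[OF r C d, folded p_def])
    have "card (S k) = card (S k \<inter> prior_union S k) + card (S k - prior_union S k)"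
      using fin k by (simp add: card_Int_Diff)
    moreover have "(1 + \<epsilon>) * s \<le> real (card (S k))" "real (card (S k - prior_union S k)) \<le> \<epsilon> / 2 * s"
      using S_card S_new k by auto
    ultimately show "(1 + \<epsilon>/2) * s \<le> real (card (S k \<inter> prior_union S k))"
      by (simp add: algebra_simps)
  qed (use fin k s in auto)
  then have "(\<Sum>k\<in>{2..K}. real (card (S k - prior_union S k)) * (d * ((1 + \<epsilon>/2) * s - real r) ^ (r - 1) / real n ^ (r - 1)))
      \<le> (\<Sum>k\<in>{2..K}. p * card (new_edges r S k))"
    by (rule sum_mono)
  moreover have "(\<Sum>k\<in>{1..K}. card (new_edges r S k)) = card (new_edges r S 1) + (\<Sum>k\<in>{2..K}. card (new_edges r S k))"
    using K by (simp add: sum.atLeast_Suc_atMost numeral_2_eq_2)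
  ultimately show ?thesis using first unfolding p_def by (simp add: distrib_left sum_distrib_left)
qed

text \<open>The sequences satisfying (H2) and (H3) with s = \<alpha> n, as functions restricted to {1..K}
  so that there are finitely many.\<close>

definition admissible_seqs :: "nat \<Rightarrow> nat \<Rightarrow> real \<Rightarrow> real \<Rightarrow> (nat \<Rightarrow> nat set) set" where
  "admissible_seqs n K \<epsilon> s = {S \<in> PiE {1..K} (\<lambda>_. Pow {1..n}).
      (\<forall>k\<in>{1..K}. (1 + \<epsilon>) * s \<le> real (card (S k))) \<and>
      (\<forall>k\<in>{2..K}. \<epsilon> / 4 * s \<le> real (card (S k - prior_union S k)) \<and>
                  real (card (S k - prior_union S k)) \<le> \<epsilon> / 2 * s)}"

definition first_set_weight :: "nat \<Rightarrow> nat \<Rightarrow> real \<Rightarrow> nat \<Rightarrow> real" where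
  "first_set_weight n r d a = exp (- (d * (real a - real r) ^ r / (real r * real n ^ (r - 1))))"

definition new_part_weight :: "nat \<Rightarrow> nat \<Rightarrow> real \<Rightarrow> real \<Rightarrow> real \<Rightarrow> nat \<Rightarrow> real" where
  "new_part_weight n r d \<epsilon> s x = exp (- (real x * (d * ((1 + \<epsilon>/2) * s - real r) ^ (r - 1) / real n ^ (r - 1))))"

definition seq_weight :: "nat \<Rightarrow> nat \<Rightarrow> real \<Rightarrow> real \<Rightarrow> real \<Rightarrow> nat \<Rightarrow> (nat \<Rightarrow> nat set) \<Rightarrow> real" where
  "seq_weight n r d \<epsilon> s K S = first_set_weight n r d (card (S 1))
     * (\<Prod>k\<in>{2..K}. new_part_weight n r d \<epsilon> s (card (S k - prior_union S k)))"

lemma prob_indep_seq_le: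
  assumes r: "r \<ge> 1" and K: "K \<ge> 1" and ord: "is_order n r ord"
    and C: "d \<le> real ((n - 1) choose (r - 1))" and d: "d > 0"
    and \<epsilon>: "\<epsilon> > 0" and s: "(1 + \<epsilon>/2) * s - real r \<ge> 0"
    and S: "S \<in> admissible_seqs n K \<epsilon> s" and tt: "\<forall>k\<in>{1..K}. tt k \<le> T"
  shows "measure_pmf.prob (path_noise (n choose r) T (d / real ((n - 1) choose (r - 1))))
           {W. \<forall>k\<in>{1..K}. indep_in (n choose r) ord (path (n choose r) W (tt k)) (S k)}
         \<le> seq_weight n r d \<epsilon> s K S"
proof -
  define p where "p = d / real ((n - 1) choose (r - 1))"
  define N where "N = (\<Sum>k\<in>{1..K}. card (new_edges r S k))"
  have C_pos: "((n - 1) choose (r - 1)) > 0" using C d by (metis of_nat_0_less_iff order_less_le_trans)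
  then have p: "0 \<le> p" "p \<le> 1" unfolding p_def using C d by auto
  have S_props: "\<forall>k\<in>{1..K}. S k \<subseteq> {1..n}" "\<forall>k\<in>{1..K}. (1 + \<epsilon>) * s \<le> real (card (S k))"
      "\<forall>k\<in>{2..K}. real (card (S k - prior_union S k)) \<le> \<epsilon> / 2 * s"
    using S unfolding admissible_seqs_def by (auto simp: PiE_iff)
  have "measure_pmf.prob (path_noise (n choose r) T p)
           {W. \<forall>k\<in>{1..K}. indep_in (n choose r) ord (path (n choose r) W (tt k)) (S k)} \<le> (1 - p) ^ N"
    unfolding N_def using prob_all_indep_le[OF ord refl S_props(1) tt p] .
  also have "\<dots> \<le> exp (- p) ^ N"
    using p by (intro power_mono) (auto simp: exp_ge_add_one_self[of "-p", simplified] add.commute[of 1])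
  also have "\<dots> = exp (- (p * real N))" by (simp add: exp_of_nat_mult[symmetric] mult.commute)
  also have "\<dots> \<le> exp (- (d * (real (card (S 1)) - real r) ^ r / (real r * real n ^ (r - 1))
         + (\<Sum>k\<in>{2..K}. real (card (S k - prior_union S k)) * (d * ((1 + \<epsilon>/2) * s - real r) ^ (r - 1) / real n ^ (r - 1)))))"
  proof -
    have "d \<ge> 0" using d by simp
    from weighted_new_edges_ge[OF r C_pos this \<epsilon> s K S_props]
    show ?thesis unfolding p_def N_def by simp
  qed
  also have "\<dots> = seq_weight n r d \<epsilon> s K S"
    unfolding seq_weight_def first_set_weight_def new_part_weight_def
    by (simp only: minus_add_distrib sum_negf[symmetric] exp_add exp_sum[OF finite_atLeastAtMost])
  finally show ?thesis unfolding p_def .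
qed

lemma bad_seq_imp_admissible:
  assumes "bad_seq n r ord T d \<epsilon> K W"
  obtains S tt where "S \<in> admissible_seqs n K \<epsilon> (alpha r d * real n)" "tt \<in> PiE {1..K} (\<lambda>_. {0..T})"
    "\<forall>k\<in>{1..K}. indep_in (n choose r) ord (path (n choose r) W (tt k)) (S k)"
proof -
  obtain S0 where S0: "\<forall>k\<in>{1..K}. S0 k \<subseteq> {1..n}"
      "\<forall>k\<in>{1..K}. \<exists>t\<le>T. indep_in (n choose r) ord (path (n choose r) W t) (S0 k)"
      "\<forall>k\<in>{1..K}. (1 + \<epsilon>) * alpha r d * real n \<le> real (card (S0 k))"
      "\<forall>k\<in>{2..K}. \<epsilon> / 4 * alpha r d * real n \<le> real (card (S0 k - (\<Union>l\<in>{1..<k}. S0 l))) \<and>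
         real (card (S0 k - (\<Union>l\<in>{1..<k}. S0 l))) \<le> \<epsilon> / 2 * alpha r d * real n"
    using assms unfolding bad_seq_def by blast
  obtain t where t: "\<forall>k\<in>{1..K}. t k \<le> T \<and> indep_in (n choose r) ord (path (n choose r) W (t k)) (S0 k)"
    using bchoice[OF S0(2)] by blast
  have "prior_union (restrict S0 {1..K}) k = (\<Union>l\<in>{1..<k}. S0 l)" if "k \<in> {1..K}" for k
    using that unfolding prior_union_def by auto
  then have "restrict S0 {1..K} \<in> admissible_seqs n K \<epsilon> (alpha r d * real n)"
    using S0(1,3,4) unfolding admissible_seqs_def by (auto simp: ac_simps)
  moreover have "restrict t {1..K} \<in> PiE {1..K} (\<lambda>_. {0..T})" using t by auto
  moreover have "\<forall>k\<in>{1..K}. indep_in (n choose r) ord (path (n choose r) W (restrict t {1..K} k)) (restrict S0 {1..K} k)"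
    using t by simp
  ultimately show thesis by (rule that)
qed

lemma prob_bad_seq_le_sum:
  assumes r: "r \<ge> 1" and K: "K \<ge> 1" and ord: "is_order n r ord"
    and C: "d \<le> real ((n - 1) choose (r - 1))" and d: "d > 0"
    and \<epsilon>: "\<epsilon> > 0" and s: "(1 + \<epsilon>/2) * (alpha r d * real n) - real r \<ge> 0"
  shows "measure_pmf.prob (path_noise (n choose r) T (d / real ((n - 1) choose (r - 1))))
           {W. bad_seq n r ord T d \<epsilon> K W}
         \<le> (real T + 1) ^ K * (\<Sum>S\<in>admissible_seqs n K \<epsilon> (alpha r d * real n). seq_weight n r d \<epsilon> (alpha r d * real n) K S)"
proof -
  define M where "M = path_noise (n choose r) T (d / real ((n - 1) choose (r - 1)))"
  define SS where "SS = admissible_seqs n K \<epsilon> (alpha r d * real n)"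
  define TT where "TT = PiE {1..K} (\<lambda>_::nat. {0..T})"
  define Ev where "Ev = (\<lambda>(S, tt). {W. \<forall>k\<in>{1..K}. indep_in (n choose r) ord (path (n choose r) W (tt k)) (S k)})"
  have fin: "finite SS" "finite TT" unfolding SS_def TT_def admissible_seqs_def by (auto intro!: finite_PiE)
  have "{W. bad_seq n r ord T d \<epsilon> K W} \<subseteq> (\<Union>z\<in>SS \<times> TT. Ev z)"
  proof
    fix W assume "W \<in> {W. bad_seq n r ord T d \<epsilon> K W}"
    then obtain S tt where "S \<in> SS" "tt \<in> TT" "W \<in> Ev (S, tt)"
      unfolding SS_def TT_def Ev_def by (auto elim: bad_seq_imp_admissible)
    then show "W \<in> (\<Union>z\<in>SS \<times> TT. Ev z)" by blast
  qed
  then have "measure_pmf.prob M {W. bad_seq n r ord T d \<epsilon> K W} \<le> measure_pmf.prob M (\<Union>z\<in>SS \<times> TT. Ev z)"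
    by (rule measure_pmf.finite_measure_mono) simp
  also have "\<dots> \<le> (\<Sum>z\<in>SS \<times> TT. measure_pmf.prob M (Ev z))"
    using fin by (intro measure_UNION_le) auto
  also have "\<dots> \<le> (\<Sum>z\<in>SS \<times> TT. seq_weight n r d \<epsilon> (alpha r d * real n) K (fst z))"
  proof (rule sum_mono, clarify)
    fix S tt assume S: "S \<in> SS" and "tt \<in> TT"
    then have "\<forall>k\<in>{1..K}. tt k \<le> T" unfolding TT_def by auto
    from prob_indep_seq_le[OF r K ord C d \<epsilon> s S[unfolded SS_def] this]
    show "measure_pmf.prob M (Ev (S, tt)) \<le> seq_weight n r d \<epsilon> (alpha r d * real n) K (fst (S, tt))"
      unfolding M_def Ev_def by simp
  qed
  also have "\<dots> = (\<Sum>S\<in>SS. \<Sum>tt\<in>TT. seq_weight n r d \<epsilon> (alpha r d * real n) K S)"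
    unfolding sum.cartesian_product by (simp only: split_def)
  also have "\<dots> = (real T + 1) ^ K * (\<Sum>S\<in>SS. seq_weight n r d \<epsilon> (alpha r d * real n) K S)"
    by (simp add: sum_distrib_left TT_def card_PiE add.commute)
  finally show ?thesis unfolding M_def SS_def .
qed

lemma K_times_new_part_ge_one:
  fixes \<epsilon> :: real
  assumes \<epsilon>: "\<epsilon> > 0" and r: "r \<ge> 2" and K: "2 ^ (r + 1) / \<epsilon> ^ r \<le> real K - 1"
  shows "(real K - 1) * (\<epsilon> / 4 * (\<epsilon> / 2) ^ (r - 1)) \<ge> 1"
proof -
  obtain k where k: "r = Suc k" using r by (cases r) auto
  then have "\<epsilon> / 4 * (\<epsilon> / 2) ^ (r - 1) = \<epsilon> ^ r / 2 ^ (r + 1)"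
    by (simp add: power_divide)
  moreover have "1 \<le> (real K - 1) * (\<epsilon> ^ r / 2 ^ (r + 1))"
    using K \<epsilon> by (simp add: field_simps)
  ultimately show ?thesis by simp
qed

text \<open>The K - 1 later sets lose more than the first set gains: this is where the lower bound
  on K enters.\<close>

lemma exp_first_times_new_pow_le:
  fixes \<epsilon> s L :: real
  assumes \<epsilon>: "\<epsilon> > 0" and r: "r \<ge> 2" and K: "2 ^ (r + 1) / \<epsilon> ^ r \<le> real K - 1"
    and sL: "s * L \<ge> 0"
  shows "exp (s * L * (1 - 7 / (8 * real r)))
           * exp (- (\<epsilon> * s / 4 * L * (\<epsilon>/2) ^ (r - 1) * (1 - 1 / (8 * real r)))) ^ (K - 1)
         \<le> exp (- (3 / (4 * real r)) * s * L)"
proof -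
  define R g where "R = real r" and "g = (\<epsilon>/2) ^ (r - 1)"
  define q where "q = \<epsilon> / 4 * g"
  have R: "R \<ge> 2" using r unfolding R_def by simp
  have "2 ^ (r + 1) / \<epsilon> ^ r > 0" using \<epsilon> by simp
  then have "real K \<ge> 1" using K by linarith
  then have K1: "real (K - 1) = real K - 1" by (simp add: of_nat_diff)
  have "1 * (s * L * (1 - 1 / (8 * R))) \<le> (real K - 1) * q * (s * L * (1 - 1 / (8 * R)))"
    using K_times_new_part_ge_one[OF \<epsilon> r K] sL R unfolding q_def g_def R_def
    by (intro mult_right_mono) auto
  moreover have "real (K - 1) * - (\<epsilon> * s / 4 * L * g * (1 - 1 / (8 * R)))
      = - ((real K - 1) * q * (s * L * (1 - 1 / (8 * R))))"
    unfolding K1 q_def by (simp add: algebra_simps)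
  moreover have "s * L * (1 - 7 / (8 * R)) - s * L * (1 - 1 / (8 * R)) = - (3 / (4 * R)) * s * L"
    using R by (simp add: field_simps)
  ultimately have "s * L * (1 - 7 / (8 * R)) + real (K - 1) * - (\<epsilon> * s / 4 * L * g * (1 - 1 / (8 * R)))
      \<le> - (3 / (4 * R)) * s * L"
    by linarith
  then show ?thesis
    unfolding R_def g_def by (simp add: exp_of_nat_mult[symmetric] mult_exp_exp)
qed

lemma sum_first_set_weights_le:
  fixes r K n :: nat and \<epsilon> d \<alpha> L :: real
  assumes r: "r \<ge> 2" and n: "n \<ge> 1" and \<epsilon>: "\<epsilon> > 0" and \<alpha>: "\<alpha> > 0" and d: "d > 0"
    and L: "d * \<alpha> ^ (r - 1) = L" and ln_\<alpha>: "- ln \<alpha> \<le> L"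
    and L_ge: "32 * real r * (1 + real K) \<le> L" and s_ge: "32 * real r ^ 3 \<le> \<alpha> * real n"
  shows "(\<Sum>A\<in>{A \<in> Pow {1..n}. (1 + \<epsilon>) * (\<alpha> * real n) \<le> real (card A)}.
            2 ^ ((K - 1) * card A) * first_set_weight n r d (card A))
         \<le> (real n + 1) * exp (\<alpha> * real n * L * (1 - 7 / (8 * real r)))"
proof (rule sum_card_subsets_le[where f = "\<lambda>a. 2 ^ ((K - 1) * a) * first_set_weight n r d a"])
  fix A assume A: "A \<in> {A \<in> Pow {1..n}. (1 + \<epsilon>) * (\<alpha> * real n) \<le> real (card A)}"
  then have "(1 + \<epsilon>) * (\<alpha> * real n) \<le> real (card A)" "card A \<le> n"
    using card_mono[of "{1..n}" A] by auto
  moreover have "\<alpha> * real n \<le> (1 + \<epsilon>) * (\<alpha> * real n)" using \<epsilon> \<alpha> by (simp add: distrib_right)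
  ultimately have "\<alpha> * real n \<le> real (card A)" "card A \<le> n" by linarith+
  from first_set_weight_le[OF r n \<alpha> d L ln_\<alpha> L_ge s_ge this]
  show "real (n choose card A) * (2 ^ ((K - 1) * card A) * first_set_weight n r d (card A))
      \<le> exp (\<alpha> * real n * L * (1 - 7 / (8 * real r)))"
    unfolding first_set_weight_def by (simp add: ac_simps)
qed (auto simp: first_set_weight_def)

lemma sum_new_part_weights_le:
  fixes r K n :: nat and \<epsilon> d \<alpha> L :: real
  assumes r: "r \<ge> 2" and n: "n \<ge> 1" and \<epsilon>: "\<epsilon> > 0" and \<alpha>: "\<alpha> > 0" and d: "d > 0"
    and L: "d * \<alpha> ^ (r - 1) = L" and ln_\<alpha>: "- ln \<alpha> \<le> L"
    and L_ge: "16 * real r * (1 + real K + \<bar>ln (4/\<epsilon>)\<bar>) \<le> L * (\<epsilon>/2) ^ (r - 1)"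
    and s_ge: "32 * real r ^ 3 / \<epsilon> \<le> \<alpha> * real n"
  shows "(\<Sum>N\<in>{N \<in> Pow {1..n}. \<epsilon> / 4 * (\<alpha> * real n) \<le> real (card N) \<and> real (card N) \<le> \<epsilon> / 2 * (\<alpha> * real n)}.
            2 ^ ((K - 1) * card N) * new_part_weight n r d \<epsilon> (\<alpha> * real n) (card N))
         \<le> (real n + 1) * exp (- (\<epsilon> * (\<alpha> * real n) / 4 * L * (\<epsilon>/2) ^ (r - 1) * (1 - 1 / (8 * real r))))"
proof (rule sum_card_subsets_le[where f = "\<lambda>x. 2 ^ ((K - 1) * x) * new_part_weight n r d \<epsilon> (\<alpha> * real n) x"])
  fix N assume "N \<in> {N \<in> Pow {1..n}. \<epsilon> / 4 * (\<alpha> * real n) \<le> real (card N) \<and> real (card N) \<le> \<epsilon> / 2 * (\<alpha> * real n)}"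
  then have "\<epsilon> * (\<alpha> * real n) / 4 \<le> real (card N)" by auto
  from new_part_weight_le[OF r n \<alpha> d \<epsilon> L ln_\<alpha> L_ge s_ge this]
  show "real (n choose card N) * (2 ^ ((K - 1) * card N) * new_part_weight n r d \<epsilon> (\<alpha> * real n) (card N))
      \<le> exp (- (\<epsilon> * (\<alpha> * real n) / 4 * L * (\<epsilon>/2) ^ (r - 1) * (1 - 1 / (8 * real r))))"
    unfolding new_part_weight_def by (simp add: ac_simps)
qed (auto simp: new_part_weight_def)

lemma sum_seq_weight_admissible_le:
  fixes r K n :: nat and \<epsilon> d \<alpha> L :: real
  assumes r: "r \<ge> 2" and \<epsilon>: "\<epsilon> > 0" and K: "2 ^ (r + 1) / \<epsilon> ^ r \<le> real K - 1"
    and d: "d > 0" and \<alpha>: "\<alpha> > 0" and L: "d * \<alpha> ^ (r - 1) = L" and ln_\<alpha>: "- ln \<alpha> \<le> L"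
    and L_ge: "32 * real r * (1 + real K) \<le> L"
    and L_ge': "16 * real r * (1 + real K + \<bar>ln (4/\<epsilon>)\<bar>) \<le> L * (\<epsilon>/2) ^ (r - 1)"
    and n: "n \<ge> 1" and s_ge: "32 * real r ^ 3 \<le> \<alpha> * real n" and s_ge': "32 * real r ^ 3 / \<epsilon> \<le> \<alpha> * real n"
  shows "(\<Sum>S\<in>admissible_seqs n K \<epsilon> (\<alpha> * real n). seq_weight n r d \<epsilon> (\<alpha> * real n) K S)
         \<le> (real n + 1) ^ K * exp (- (3 / (4 * real r)) * (\<alpha> * real n) * L)"
proof -
  define s where "s = \<alpha> * real n"
  have "2 ^ (r + 1) / \<epsilon> ^ r > 0" using \<epsilon> by simp
  then have K1: "K \<ge> 1" using K by linarith
  have s: "s \<ge> 0" using \<alpha> unfolding s_def by simp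
  have "32 * real r * (1 + real K) \<ge> 0" by simp
  then have L_pos: "L \<ge> 0" using L_ge by linarith
  have w: "seq_weight n r d \<epsilon> s K S \<ge> 0" for S
    unfolding seq_weight_def first_set_weight_def new_part_weight_def by (simp add: prod_nonneg)
  have "(\<Sum>S\<in>admissible_seqs n K \<epsilon> s. seq_weight n r d \<epsilon> s K S)
      \<le> (\<Sum>S\<in>{S \<in> PiE {1..K} (\<lambda>_. Pow {1..n}). (1 + \<epsilon>) * s \<le> real (card (S 1)) \<and>
           (\<forall>k\<in>{2..K}. \<epsilon> / 4 * s \<le> real (card (S k - prior_union S k)) \<and> real (card (S k - prior_union S k)) \<le> \<epsilon> / 2 * s)}.
           seq_weight n r d \<epsilon> s K S)"
    using K1 w unfolding admissible_seqs_def
    by (intro sum_mono2 finite_subset[OF _ finite_PiE[of "{1..K}" "\<lambda>_. Pow {1..n}"]]) auto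
  also have "\<dots> \<le> (\<Sum>A\<in>{A \<in> Pow {1..n}. (1 + \<epsilon>) * s \<le> real (card A)}. 2 ^ ((K - 1) * card A) * first_set_weight n r d (card A))
      * (\<Sum>N\<in>{N \<in> Pow {1..n}. \<epsilon> / 4 * s \<le> real (card N) \<and> real (card N) \<le> \<epsilon> / 2 * s}.
           2 ^ ((K - 1) * card N) * new_part_weight n r d \<epsilon> s (card N)) ^ (K - 1)"
    unfolding seq_weight_def
    by (rule sum_seq_weight_le) (use K1 in \<open>auto simp: first_set_weight_def new_part_weight_def\<close>)
  also have "\<dots> \<le> ((real n + 1) * exp (s * L * (1 - 7 / (8 * real r))))
      * ((real n + 1) * exp (- (\<epsilon> * s / 4 * L * (\<epsilon>/2) ^ (r - 1) * (1 - 1 / (8 * real r))))) ^ (K - 1)"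
    using sum_first_set_weights_le[OF r n \<epsilon> \<alpha> d L ln_\<alpha> L_ge s_ge]
      sum_new_part_weights_le[OF r n \<epsilon> \<alpha> d L ln_\<alpha> L_ge' s_ge']
    unfolding s_def
    by (intro mult_mono power_mono sum_nonneg)
       (auto simp: first_set_weight_def new_part_weight_def intro!: zero_le_power sum_nonneg)
  also have "\<dots> = (real n + 1) ^ K * (exp (s * L * (1 - 7 / (8 * real r)))
      * exp (- (\<epsilon> * s / 4 * L * (\<epsilon>/2) ^ (r - 1) * (1 - 1 / (8 * real r)))) ^ (K - 1))"
    using K1 by (simp add: power_mult_distrib power_Suc[symmetric] ac_simps)
  also have "\<dots> \<le> (real n + 1) ^ K * exp (- (3 / (4 * real r)) * s * L)"
    using exp_first_times_new_pow_le[OF \<epsilon> r K] s L_pos by (intro mult_left_mono) auto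
  finally show ?thesis unfolding s_def .
qed

lemma alpha_regime:
  fixes d L0 :: real
  assumes r: "r \<ge> 2" and L0: "L0 \<ge> 1" and d: "d \<ge> exp ((real r - 1) * L0)"
  defines "L \<equiv> ln d / (real r - 1)"
  shows "d > 0" "L \<ge> L0" "alpha r d > 0" "d * alpha r d ^ (r - 1) = L" "- ln (alpha r d) \<le> L"
proof -
  have R: "real r - 1 \<ge> 1" using r by simp
  show d_pos: "d > 0" using d exp_gt_zero by (rule less_le_trans[rotated])
  have "(real r - 1) * L0 \<le> ln d" using d d_pos by (metis exp_le_cancel_iff exp_ln)
  then show L: "L \<ge> L0" unfolding L_def using R by (simp add: pos_le_divide_eq mult.commute)
  have L_pos: "L / d > 0" using L L0 d_pos by simp
  have \<alpha>: "alpha r d = (L / d) powr (1 / (real r - 1))"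
    unfolding alpha_def L_def by simp
  show \<alpha>_pos: "alpha r d > 0" unfolding \<alpha> using L L0 d_pos by simp
  have "alpha r d ^ (r - 1) = (L / d) powr (1 / (real r - 1) * real (r - 1))"
    using \<alpha>_pos \<alpha> by (simp add: powr_realpow[symmetric] powr_powr)
  also have "\<dots> = L / d" using R L_pos L L0 d_pos by (simp add: of_nat_diff)
  finally show "d * alpha r d ^ (r - 1) = L" using d_pos by simp
  have "ln (alpha r d) = (ln L - ln d) / (real r - 1)"
    unfolding \<alpha> using L_pos L L0 d_pos by (simp add: ln_powr ln_div)
  moreover have "ln L \<ge> 0" using L L0 by simp
  ultimately show "- ln (alpha r d) \<le> L"
    unfolding L_def using R by (simp add: diff_divide_distrib)
qed

lemma large_n_regime:
  fixes \<alpha> \<epsilon> d :: real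
  assumes r: "r \<ge> 2" and \<alpha>: "\<alpha> > 0" and \<epsilon>: "\<epsilon> > 0" and d: "d > 0"
  shows "\<exists>N. \<forall>n\<ge>N. n \<ge> 1 \<and> 32 * real r ^ 3 \<le> \<alpha> * real n \<and> 32 * real r ^ 3 / \<epsilon> \<le> \<alpha> * real n
           \<and> d \<le> real ((n - 1) choose (r - 1))"
proof (intro exI allI impI)
  define N where "N = nat \<lceil>32 * real r ^ 3 / \<alpha> + 32 * real r ^ 3 / (\<epsilon> * \<alpha>) + d * (real r - 1)\<rceil> + r + 1"
  fix n assume "n \<ge> N"
  then have n: "real n \<ge> 32 * real r ^ 3 / \<alpha> + 32 * real r ^ 3 / (\<epsilon> * \<alpha>) + d * (real r - 1) + real r + 1"
    unfolding N_def by linarith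
  have nonneg: "32 * real r ^ 3 / \<alpha> \<ge> 0" "32 * real r ^ 3 / (\<epsilon> * \<alpha>) \<ge> 0" "d * (real r - 1) \<ge> 0"
    using \<alpha> \<epsilon> d r by auto
  have "32 * real r ^ 3 / \<alpha> \<le> real n" using n nonneg by linarith
  then have s: "32 * real r ^ 3 \<le> \<alpha> * real n" using \<alpha> by (simp add: pos_divide_le_eq mult.commute)
  have "32 * real r ^ 3 / (\<epsilon> * \<alpha>) \<le> real n" using n nonneg by linarith
  then have s': "32 * real r ^ 3 / \<epsilon> \<le> \<alpha> * real n" using \<alpha> \<epsilon> by (simp add: field_simps)
  have "d * (real r - 1) + real r \<le> real n - 1" using n nonneg by linarith
  moreover have "r \<le> n" using n nonneg by linarith
  moreover have "real (r - 1) > 0" "real (n - 1) = real n - 1" "real (r - 1) = real r - 1"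
    using r \<open>r \<le> n\<close> by (auto simp: of_nat_diff)
  ultimately have x: "d \<le> real (n - 1) / real (r - 1)" "1 \<le> real (n - 1) / real (r - 1)" "r \<le> n"
    using d r by (auto simp: field_simps)
  moreover have "(real (n - 1) / real (r - 1)) ^ 1 \<le> (real (n - 1) / real (r - 1)) ^ (r - 1)"
    using x(2) r by (intro power_increasing) auto
  ultimately have "d \<le> (real (n - 1) / real (r - 1)) ^ (r - 1)" by simp
  also have "\<dots> \<le> real ((n - 1) choose (r - 1))"
    using x by (intro binomial_ge_n_over_k_pow_k) auto
  finally show "n \<ge> 1 \<and> 32 * real r ^ 3 \<le> \<alpha> * real n \<and> 32 * real r ^ 3 / \<epsilon> \<le> \<alpha> * real n
      \<and> d \<le> real ((n - 1) choose (r - 1))"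
    using s s' x r by auto
qed

lemma prob_bad_seq_le:
  fixes r K n T :: nat and \<epsilon> d L :: real
  assumes r: "r \<ge> 2" and \<epsilon>: "\<epsilon> > 0" and K: "2 ^ (r + 1) / \<epsilon> ^ r \<le> real K - 1"
    and d: "d > 0" and \<alpha>: "alpha r d > 0" and L: "d * alpha r d ^ (r - 1) = L" and ln_\<alpha>: "- ln (alpha r d) \<le> L"
    and L_ge: "32 * real r * (1 + real K) \<le> L"
    and L_ge': "16 * real r * (1 + real K + \<bar>ln (4/\<epsilon>)\<bar>) \<le> L * (\<epsilon>/2) ^ (r - 1)"
    and n: "n \<ge> 1" and s_ge: "32 * real r ^ 3 \<le> alpha r d * real n"
    and s_ge': "32 * real r ^ 3 / \<epsilon> \<le> alpha r d * real n"
    and C: "d \<le> real ((n - 1) choose (r - 1))" and ord: "is_order n r ord"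
  shows "measure_pmf.prob (path_noise (n choose r) T (d / real ((n - 1) choose (r - 1))))
           {W. bad_seq n r ord T d \<epsilon> K W}
         \<le> (real T + 1) ^ K * (real n + 1) ^ K * exp (- (3 / (4 * real r)) * (alpha r d * real n) * L)"
proof -
  have "2 ^ (r + 1) / \<epsilon> ^ r > 0" using \<epsilon> by simp
  then have K1: "K \<ge> 1" using K by linarith
  have "(1::real) \<le> real r * real r" using r mult_mono[of 1 "real r" 1 "real r"] by simp
  then have "real r \<le> real r ^ 3" using mult_left_mono[of 1 "real r * real r" "real r"]
    by (simp add: power3_eq_cube)
  then have "real r \<le> alpha r d * real n" using s_ge by linarith
  moreover have "alpha r d * real n \<le> (1 + \<epsilon>/2) * (alpha r d * real n)"
    using \<epsilon> \<alpha> by (simp add: distrib_right)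
  ultimately have s: "(1 + \<epsilon>/2) * (alpha r d * real n) - real r \<ge> 0" by linarith
  have "r \<ge> 1" using r by simp
  from prob_bad_seq_le_sum[OF this K1 ord C d \<epsilon> s, of T]
  have "measure_pmf.prob (path_noise (n choose r) T (d / real ((n - 1) choose (r - 1))))
          {W. bad_seq n r ord T d \<epsilon> K W}
        \<le> (real T + 1) ^ K * (\<Sum>S\<in>admissible_seqs n K \<epsilon> (alpha r d * real n). seq_weight n r d \<epsilon> (alpha r d * real n) K S)" .
  also have "\<dots> \<le> (real T + 1) ^ K * ((real n + 1) ^ K * exp (- (3 / (4 * real r)) * (alpha r d * real n) * L))"
    using sum_seq_weight_admissible_le[OF r \<epsilon> K d \<alpha> L ln_\<alpha> L_ge L_ge' n s_ge s_ge']
    by (rule mult_left_mono) simp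
  finally show ?thesis by (simp only: mult.assoc)
qed

lemma polynomial_factor_absorbed:
  fixes a b c :: real
  assumes a: "a > 0" and c: "0 < c" "c < b"
  shows "\<exists>N. \<forall>n\<ge>N. \<forall>T. real T \<le> real n powr a \<longrightarrow>
           (real T + 1) ^ K * (real n + 1) ^ K * exp (- b * real n) \<le> exp (- c * real n)"
proof -
  have "eventually (\<lambda>n::nat. real K * ln (real n powr a + 1) + real K * ln (real n + 1) \<le> (b - c) * real n) sequentially"
    using a c by real_asymp
  then obtain N where N: "\<And>n. n \<ge> N \<Longrightarrow> real K * ln (real n powr a + 1) + real K * ln (real n + 1) \<le> (b - c) * real n"
    unfolding eventually_sequentially by blast
  show ?thesis
  proof (intro exI allI impI)
    fix n T assume n: "n \<ge> N" and T: "real T \<le> real n powr a"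
    have "(real T + 1) ^ K * (real n + 1) ^ K \<le> (real n powr a + 1) ^ K * (real n + 1) ^ K"
      using T by (intro mult_right_mono power_mono) auto
    also have "\<dots> = exp (real K * ln (real n powr a + 1) + real K * ln (real n + 1))"
      by (simp add: exp_add exp_of_nat_mult exp_ln add_nonneg_pos)
    also have "\<dots> \<le> exp ((b - c) * real n)" using N[OF n] by simp
    finally have "(real T + 1) ^ K * (real n + 1) ^ K * exp (- b * real n) \<le> exp ((b - c) * real n) * exp (- b * real n)"
      by (intro mult_right_mono) auto
    then show "(real T + 1) ^ K * (real n + 1) ^ K * exp (- b * real n) \<le> exp (- c * real n)"
      by (simp add: mult_exp_exp algebra_simps)
  qed
qed

lemma bad_seq_exponentially_unlikely:
  fixes r K :: nat and \<epsilon> a d L0 :: real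
  assumes r: "r \<ge> 2" and \<epsilon>: "\<epsilon> > 0" and a: "a > 0" and K: "2 ^ (r + 1) / \<epsilon> ^ r \<le> real K - 1"
    and L0: "L0 \<ge> 1" "32 * real r * (1 + real K) \<le> L0"
      "16 * real r * (1 + real K + \<bar>ln (4/\<epsilon>)\<bar>) \<le> L0 * (\<epsilon>/2) ^ (r - 1)"
    and d: "d \<ge> exp ((real r - 1) * L0)"
  shows "\<exists>c > 0. \<exists>N. \<forall>n \<ge> N. \<forall>T ord.
           real T \<le> real n powr a \<longrightarrow> is_order n r ord \<longrightarrow>
           measure_pmf.prob (path_noise (n choose r) T (d / real ((n - 1) choose (r - 1))))
             {W. bad_seq n r ord T d \<epsilon> K W} \<le> exp (- c * real n)"
proof -
  define L where "L = ln d / (real r - 1)"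
  note regime = alpha_regime[OF r L0(1) d, folded L_def]
  have L_ge: "32 * real r * (1 + real K) \<le> L" "16 * real r * (1 + real K + \<bar>ln (4/\<epsilon>)\<bar>) \<le> L * (\<epsilon>/2) ^ (r - 1)"
    using L0 regime(2) \<epsilon> by (auto intro: order_trans mult_right_mono)
  define c where "c = alpha r d * L / (2 * real r)"
  have c: "0 < c" "c < 3 / (4 * real r) * L * alpha r d"
    using regime(2,3) L0(1) r unfolding c_def by (auto simp: field_simps)
  obtain N1 where N1: "\<forall>n\<ge>N1. n \<ge> 1 \<and> 32 * real r ^ 3 \<le> alpha r d * real n
      \<and> 32 * real r ^ 3 / \<epsilon> \<le> alpha r d * real n \<and> d \<le> real ((n - 1) choose (r - 1))"
    using large_n_regime[OF r regime(3) \<epsilon> regime(1)] by blast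
  obtain N2 where N2: "\<forall>n\<ge>N2. \<forall>T. real T \<le> real n powr a \<longrightarrow>
      (real T + 1) ^ K * (real n + 1) ^ K * exp (- (3 / (4 * real r) * L * alpha r d) * real n) \<le> exp (- c * real n)"
    using polynomial_factor_absorbed[OF a c] by blast
  have "measure_pmf.prob (path_noise (n choose r) T (d / real ((n - 1) choose (r - 1))))
          {W. bad_seq n r ord T d \<epsilon> K W} \<le> exp (- c * real n)"
    if n: "n \<ge> max N1 N2" and T: "real T \<le> real n powr a" and ord: "is_order n r ord" for n T ord
  proof -
    have "measure_pmf.prob (path_noise (n choose r) T (d / real ((n - 1) choose (r - 1))))
          {W. bad_seq n r ord T d \<epsilon> K W}
        \<le> (real T + 1) ^ K * (real n + 1) ^ K * exp (- (3 / (4 * real r)) * (alpha r d * real n) * L)"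
      using N1 n by (intro prob_bad_seq_le[OF r \<epsilon> K regime(1,3,4,5) L_ge _ _ _ _ ord]) auto
    also have "\<dots> = (real T + 1) ^ K * (real n + 1) ^ K * exp (- (3 / (4 * real r) * L * alpha r d) * real n)"
      by (simp add: ac_simps)
    also have "\<dots> \<le> exp (- c * real n)" using N2 n T by simp
    finally show ?thesis .
  qed
  with c show ?thesis by blast
qed

theorem mainTheorem13:
  fixes r K :: nat and \<epsilon> a :: real
  assumes "r \<ge> 2" and "\<epsilon> > 0" and "a > 0"
    and "real K \<ge> real_of_int (ceiling (2 ^ (r + 1) / \<epsilon> ^ r)) + 1"
  shows "\<exists>d0. \<forall>d \<ge> d0. \<exists>c > 0. \<exists>N. \<forall>n \<ge> N. \<forall>T ord.
           real T \<le> real n powr a \<longrightarrow> is_order n r ord \<longrightarrow>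
           measure_pmf.prob (path_noise (n choose r) T (d / real ((n - 1) choose (r - 1))))
             {W. bad_seq n r ord T d \<epsilon> K W} \<le> exp (- c * real n)"
proof -
  have K: "2 ^ (r + 1) / \<epsilon> ^ r \<le> real K - 1"
    using assms(4) le_of_int_ceiling[of "2 ^ (r + 1) / \<epsilon> ^ r"] by linarith
  define L0 where "L0 = max 1 (max (32 * real r * (1 + real K))
                     (16 * real r * (1 + real K + \<bar>ln (4/\<epsilon>)\<bar>) / (\<epsilon>/2) ^ (r - 1)))"
  have "(\<epsilon>/2) ^ (r - 1) > 0" using assms(2) by simp
  moreover have "L0 \<ge> 1" "32 * real r * (1 + real K) \<le> L0"
      "16 * real r * (1 + real K + \<bar>ln (4/\<epsilon>)\<bar>) / (\<epsilon>/2) ^ (r - 1) \<le> L0"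
    unfolding L0_def by auto
  ultimately have "L0 \<ge> 1" "32 * real r * (1 + real K) \<le> L0"
      "16 * real r * (1 + real K + \<bar>ln (4/\<epsilon>)\<bar>) \<le> L0 * (\<epsilon>/2) ^ (r - 1)"
    by (simp_all add: pos_divide_le_eq)
  with bad_seq_exponentially_unlikely[OF assms(1-3) K] show ?thesis by blast
qed

end
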